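(* Let $D$ be a connected locally finite C-homogeneous digraph and $x\in VD$. If the subdigraph induced by $N^+(x)$ or the subdigraph induced by $N^-(x)$ is isomorphic to $C_3[\bar K_n]$ for some $n\ge 1$, then $D\cong H[\bar K_n]$.
   Context: A digraph has an irreflexive, antisymmetric edge relation; connectedness and local finiteness refer to the underlying undirected graph. $D$ is C-homogeneous if every isomorphism between finite connected induced subdigraphs extends to an automorphism of $D$. $N^+(x)=\{y: xy\in ED\}$, $N^-(x)=\{y: yx\in ED\}$. $C_3$ is the directed triangle, $\bar K_n$ the digraph on $n$ vertices without edges, and $D[D']$ the lexicographic product: vertex set $VD\times VD'$, edge $(x,y)(x',y')$ iff $xx'\in ED$ or ($x=x'$ and $yy'\in ED'$). A digraph is homogeneous if every isomorphism between finite induced subdigraphs extends to an automorphism. By Lachlan's classification, a finite digraph is homogeneous iff it is isomorphic to the directed 4-cycle, to $\bar K_n$, $\bar K_n[C_3]$, $C_3[\bar K_n]$ ($n\ge1$), or to one further exceptional digraph; $H$ denotes this exceptional finite homogeneous digraph. *)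

theory Defs
  imports Main
begin

definition is_digraph :: "'a set \<Rightarrow> ('a \<times> 'a) set \<Rightarrow> bool" where
  "is_digraph V E \<longleftrightarrow> E \<subseteq> V \<times> V \<and> (\<forall>x. (x, x) \<notin> E) \<and> (\<forall>x y. (x, y) \<in> E \<longrightarrow> (y, x) \<notin> E)"

definition dg_connected :: "'a set \<Rightarrow> ('a \<times> 'a) set \<Rightarrow> bool" where
  "dg_connected V E \<longleftrightarrow> (\<forall>x\<in>V. \<forall>y\<in>V. (x, y) \<in> (E \<union> E\<inverse>)\<^sup>*)"

definition locally_finite :: "'a set \<Rightarrow> ('a \<times> 'a) set \<Rightarrow> bool" where
  "locally_finite V E \<longleftrightarrow> (\<forall>x\<in>V. finite {y. (x, y) \<in> E \<or> (y, x) \<in> E})"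

definition induced :: "('a \<times> 'a) set \<Rightarrow> 'a set \<Rightarrow> ('a \<times> 'a) set" where
  "induced E A = E \<inter> (A \<times> A)"

definition out_nbhd :: "('a \<times> 'a) set \<Rightarrow> 'a \<Rightarrow> 'a set" where
  "out_nbhd E x = {y. (x, y) \<in> E}"

definition in_nbhd :: "('a \<times> 'a) set \<Rightarrow> 'a \<Rightarrow> 'a set" where
  "in_nbhd E x = {y. (y, x) \<in> E}"

definition dg_iso :: "'a set \<Rightarrow> ('a \<times> 'a) set \<Rightarrow> 'b set \<Rightarrow> ('b \<times> 'b) set \<Rightarrow> ('a \<Rightarrow> 'b) \<Rightarrow> bool" where
  "dg_iso V1 E1 V2 E2 f \<longleftrightarrow> bij_betw f V1 V2 \<and>
     (\<forall>x\<in>V1. \<forall>y\<in>V1. (x, y) \<in> E1 \<longleftrightarrow> (f x, f y) \<in> E2)"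

definition dg_isomorphic :: "'a set \<Rightarrow> ('a \<times> 'a) set \<Rightarrow> 'b set \<Rightarrow> ('b \<times> 'b) set \<Rightarrow> bool" where
  "dg_isomorphic V1 E1 V2 E2 \<longleftrightarrow> (\<exists>f. dg_iso V1 E1 V2 E2 f)"

definition C_homogeneous :: "'a set \<Rightarrow> ('a \<times> 'a) set \<Rightarrow> bool" where
  "C_homogeneous V E \<longleftrightarrow>
     (\<forall>A B f. A \<subseteq> V \<and> B \<subseteq> V \<and> finite A \<and> dg_connected A (induced E A) \<and>
        dg_connected B (induced E B) \<and>
        dg_iso A (induced E A) B (induced E B) f \<longrightarrow>
        (\<exists>g. dg_iso V E V E g \<and> (\<forall>x\<in>A. g x = f x)))"

definition C3_V :: "nat set" where "C3_V = {0, 1, 2}"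
definition C3_E :: "(nat \<times> nat) set" where "C3_E = {(0, 1), (1, 2), (2, 0)}"

definition Kbar_V :: "nat \<Rightarrow> nat set" where "Kbar_V n = {..<n}"
definition Kbar_E :: "(nat \<times> nat) set" where "Kbar_E = {}"

definition lex_V :: "'a set \<Rightarrow> 'b set \<Rightarrow> ('a \<times> 'b) set" where
  "lex_V V1 V2 = V1 \<times> V2"
definition lex_E :: "'a set \<Rightarrow> ('a \<times> 'a) set \<Rightarrow> 'b set \<Rightarrow> ('b \<times> 'b) set \<Rightarrow> (('a \<times> 'b) \<times> ('a \<times> 'b)) set" where
  "lex_E V1 E1 V2 E2 = {((x, y), (x', y')). x \<in> V1 \<and> y \<in> V2 \<and> x' \<in> V1 \<and> y' \<in> V2 \<and>
      ((x, x') \<in> E1 \<or> (x = x' \<and> (y, y') \<in> E2))}"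

text \<open>The exceptional finite homogeneous digraph H of Lachlan's classification: the Cayley
  digraph of the quaternion group Q8 with connection set {i, j, k}. Vertices are numbered
  0..7 as 1,-1,i,-i,j,-j,k,-k (index 2*u + s, u in 1,i,j,k and s = 0 for +, 1 for -);
  x -> x*s for s in {i,j,k}.\<close>
definition H_V :: "nat set" where "H_V = {..<8}"
definition H_E :: "(nat \<times> nat) set" where
  "H_E = {(0, 2), (0, 4), (0, 6), (1, 3), (1, 5), (1, 7), (2, 1), (2, 5), (2, 6), (3, 0), (3, 4),
          (3, 7), (4, 1), (4, 2), (4, 7), (5, 0), (5, 3), (5, 6), (6, 1), (6, 3), (6, 4), (7, 0),
          (7, 2), (7, 5)}"

end

theory Submission
  imports Defs
begin

text \<open>C-homogeneity makes the digraph vertex- and arc-transitive, so every out-neighbourhood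
  is a blow-up of the directed triangle with three colour classes of size \<open>n\<close>. For an
  arc \<open>u \<rightarrow> w\<close>, the vertices closing a directed triangle over it form one colour class
  of \<open>N w\<close>, and a transitivity argument shows that they point to every common
  out-neighbour of \<open>u\<close> and \<open>w\<close>. It follows that the vertices of one colour class are
  twins (have the same out-neighbourhood). Starting from a directed triangle
  \<open>i \<rightarrow> k \<rightarrow> j \<rightarrow> i\<close> in \<open>N x0\<close>, eight blocks of twins appear: the class of
  \<open>x0\<close>, the common out-neighbours of \<open>i\<close> and \<open>k\<close>, the classes of \<open>i, k, j\<close> and the
  closers of \<open>x0 \<rightarrow> i, x0 \<rightarrow> k, x0 \<rightarrow> j\<close>. Their out-neighbourhoods are unions of
  blocks exactly as the out-neighbourhoods of \<open>1, -1, \<plusminus>i, \<plusminus>j, \<plusminus>k\<close> in the Cayley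
  digraph \<open>H\<close> of the quaternion group, and vertex transitivity together with connectedness
  shows that the blocks cover the whole digraph. The case of in-neighbourhoods reduces to
  this one by reversing all arcs, since \<open>H\<close> is isomorphic to its converse.\<close>

definition succ3 :: "nat \<Rightarrow> nat" where
  "succ3 c = Suc c mod 3"

lemma succ3_simps [simp]: "succ3 0 = 1" "succ3 1 = 2" "succ3 (Suc 0) = 2" "succ3 2 = 0"
  by (simp_all add: succ3_def)

lemma succ3_less: "succ3 c < 3"
  by (simp add: succ3_def)

lemma succ3_succ3_succ3: "c < 3 \<Longrightarrow> succ3 (succ3 (succ3 c)) = c"
  by (auto simp: succ3_def mod_Suc)

lemma succ3_neq: "c < 3 \<Longrightarrow> succ3 c \<noteq> c"
  by (auto simp: succ3_def mod_Suc)

lemma succ3_trichotomy: "c < 3 \<Longrightarrow> d < 3 \<Longrightarrow> d = c \<or> d = succ3 c \<or> c = succ3 d"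
  by (auto simp: succ3_def mod_Suc)

lemma succ3_eq_iff: "c < 3 \<Longrightarrow> d < 3 \<Longrightarrow> c = succ3 d \<longleftrightarrow> d = succ3 (succ3 c)"
  by (auto simp: succ3_def mod_Suc)

lemma succ3_cases: "c < 3 \<Longrightarrow> d < 3 \<Longrightarrow> d = c \<or> d = succ3 c \<or> d = succ3 (succ3 c)"
  by (auto simp: succ3_def mod_Suc)

section \<open>Blow-ups of the directed triangle\<close>

definition C3_colouring :: "('a \<times> 'a) set \<Rightarrow> 'a set \<Rightarrow> nat \<Rightarrow> ('a \<Rightarrow> nat) \<Rightarrow> bool" where
  "C3_colouring E M n f \<longleftrightarrow> (\<forall>a\<in>M. f a < 3) \<and> (\<forall>c<3. card {a\<in>M. f a = c} = n) \<and>
     (\<forall>a\<in>M. \<forall>b\<in>M. (a, b) \<in> E \<longleftrightarrow> f b = succ3 (f a))"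

definition C3_blowup :: "('a \<times> 'a) set \<Rightarrow> 'a set \<Rightarrow> nat \<Rightarrow> bool" where
  "C3_blowup E M n \<longleftrightarrow> finite M \<and> (\<exists>f. C3_colouring E M n f)"

lemma C3_blowup_induced: "C3_blowup (induced E M) M n \<longleftrightarrow> C3_blowup E M n"
  by (simp add: C3_blowup_def C3_colouring_def induced_def)

lemma C3_blowup_dg_iso:
  assumes iso: "dg_iso M R M' R' g" and blowup: "C3_blowup R' M' n"
  shows "C3_blowup R M n"
proof -
  obtain f where f: "C3_colouring R' M' n f" and "finite M'"
    using blowup by (auto simp: C3_blowup_def)
  have bij: "bij_betw g M M'" and arcs: "\<forall>a\<in>M. \<forall>b\<in>M. (a, b) \<in> R \<longleftrightarrow> (g a, g b) \<in> R'"
    using iso by (auto simp: dg_iso_def)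
  have "finite M"
    using \<open>finite M'\<close> bij bij_betw_finite by blast
  moreover have "C3_colouring R M n (f \<circ> g)"
    unfolding C3_colouring_def
  proof (intro conjI ballI allI impI)
    fix a assume "a \<in> M"
    then show "(f \<circ> g) a < 3"
      using f bij_betwE[OF bij] by (simp add: C3_colouring_def)
  next
    fix c :: nat assume "c < 3"
    have "bij_betw g {a\<in>M. f (g a) = c} {b\<in>M'. f b = c}"
      using bij by (auto simp: bij_betw_def inj_on_def)
    then show "card {a\<in>M. (f \<circ> g) a = c} = n"
      using f \<open>c < 3\<close> by (simp add: C3_colouring_def bij_betw_same_card)
  next
    fix a b assume "a \<in> M" "b \<in> M"
    moreover have "g a \<in> M'" "g b \<in> M'"
      using \<open>a \<in> M\<close> \<open>b \<in> M\<close> bij_betwE[OF bij] by auto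
    ultimately show "(a, b) \<in> R \<longleftrightarrow> (f \<circ> g) b = succ3 ((f \<circ> g) a)"
      using f arcs by (simp add: C3_colouring_def)
  qed
  ultimately show ?thesis
    by (auto simp: C3_blowup_def)
qed

lemma C3_blowup_lex: "C3_blowup (lex_E C3_V C3_E (Kbar_V n) Kbar_E) (lex_V C3_V (Kbar_V n)) n"
proof -
  have card: "card {p \<in> lex_V C3_V (Kbar_V n). fst p = c} = n" if "c < 3" for c
  proof -
    have "{p \<in> lex_V C3_V (Kbar_V n). fst p = c} = {c} \<times> {..<n}"
      using that by (auto simp: lex_V_def C3_V_def Kbar_V_def)
    then show ?thesis
      by (simp add: card_cartesian_product)
  qed
  have arcs: "(p, q) \<in> lex_E C3_V C3_E (Kbar_V n) Kbar_E \<longleftrightarrow> fst q = succ3 (fst p)"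
    if "p \<in> lex_V C3_V (Kbar_V n)" "q \<in> lex_V C3_V (Kbar_V n)" for p q
  proof -
    have "fst p \<in> {0, 1, 2}" "fst q \<in> {0, 1, 2}"
      using that by (auto simp: lex_V_def C3_V_def)
    then have "(fst p, fst q) \<in> C3_E \<longleftrightarrow> fst q = succ3 (fst p)"
      by (auto simp: C3_E_def)
    then show ?thesis
      using that by (auto simp: lex_E_def lex_V_def Kbar_E_def)
  qed
  have "\<forall>p \<in> lex_V C3_V (Kbar_V n). fst p < 3"
    by (auto simp: lex_V_def C3_V_def)
  moreover have "finite (lex_V C3_V (Kbar_V n))"
    by (simp add: lex_V_def C3_V_def Kbar_V_def)
  ultimately show ?thesis
    using card arcs by (auto simp: C3_blowup_def C3_colouring_def)
qed

lemma C3_blowup_if_isomorphic: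
  assumes "dg_isomorphic M (induced E M) (lex_V C3_V (Kbar_V n)) (lex_E C3_V C3_E (Kbar_V n) Kbar_E)"
  shows "C3_blowup E M n"
  using assms C3_blowup_dg_iso[OF _ C3_blowup_lex] C3_blowup_induced
  by (metis dg_isomorphic_def)

lemma C3_blowup_converse:
  assumes "C3_blowup E M n"
  shows "C3_blowup (E\<inverse>) M n"
proof -
  obtain f where f: "C3_colouring E M n f" and "finite M"
    using assms by (auto simp: C3_blowup_def)
  define g where "g a = (3 - f a) mod 3" for a
  have "C3_colouring (E\<inverse>) M n g"
    unfolding C3_colouring_def
  proof (intro conjI ballI allI impI)
    fix a show "g a < 3" by (simp add: g_def)
  next
    fix c :: nat assume "c < 3"
    have "g a = c \<longleftrightarrow> f a = (3 - c) mod 3" if "a \<in> M" for a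
    proof -
      have "f a \<in> {0, 1, 2}" "c \<in> {0, 1, 2}"
        using f that \<open>c < 3\<close> by (auto simp: C3_colouring_def)
      then show ?thesis
        by (auto simp: g_def)
    qed
    then have "{a\<in>M. g a = c} = {a\<in>M. f a = (3 - c) mod 3}"
      by blast
    then show "card {a\<in>M. g a = c} = n"
      using f by (simp add: C3_colouring_def)
  next
    fix a b assume "a \<in> M" "b \<in> M"
    then have "f a \<in> {0, 1, 2}" "f b \<in> {0, 1, 2}" "(b, a) \<in> E \<longleftrightarrow> f a = succ3 (f b)"
      using f by (auto simp: C3_colouring_def)
    then show "(a, b) \<in> E\<inverse> \<longleftrightarrow> g b = succ3 (g a)"
      by (auto simp: g_def)
  qed
  then show ?thesis
    using \<open>finite M\<close> by (auto simp: C3_blowup_def)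
qed

section \<open>Automorphisms of C-homogeneous digraphs\<close>

lemma dg_iso_trans:
  assumes "dg_iso A R B Q f" "dg_iso B Q C S g"
  shows "dg_iso A R C S (g \<circ> f)"
proof -
  have bij: "bij_betw f A B" "bij_betw g B C"
    using assms by (simp_all add: dg_iso_def)
  have "(x, y) \<in> R \<longleftrightarrow> (g (f x), g (f y)) \<in> S" if "x \<in> A" "y \<in> A" for x y
  proof -
    have "f x \<in> B" "f y \<in> B"
      using that bij_betwE[OF bij(1)] by auto
    then show ?thesis
      using assms that by (simp add: dg_iso_def)
  qed
  then show ?thesis
    using bij_betw_trans[OF bij] by (simp add: dg_iso_def)
qed

definition dg_aut :: "'a set \<Rightarrow> ('a \<times> 'a) set \<Rightarrow> ('a \<Rightarrow> 'a) \<Rightarrow> bool" where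
  "dg_aut V E g \<longleftrightarrow> dg_iso V E V E g"

lemma dg_aut_surj: "dg_aut V E g \<Longrightarrow> b \<in> V \<Longrightarrow> \<exists>a\<in>V. g a = b"
  unfolding dg_aut_def dg_iso_def bij_betw_def by (metis imageE)

lemma dg_aut_inj: "dg_aut V E g \<Longrightarrow> inj_on g V"
  by (auto simp: dg_aut_def dg_iso_def bij_betw_def)

lemma dg_aut_arc_iff: "dg_aut V E g \<Longrightarrow> a \<in> V \<Longrightarrow> b \<in> V \<Longrightarrow> (g a, g b) \<in> E \<longleftrightarrow> (a, b) \<in> E"
  by (auto simp: dg_aut_def dg_iso_def)

lemma dg_aut_out_nbhd:
  assumes g: "dg_aut V E g" and "E \<subseteq> V \<times> V" "u \<in> V"
  shows "g ` out_nbhd E u = out_nbhd E (g u)"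
proof
  show "g ` out_nbhd E u \<subseteq> out_nbhd E (g u)"
    using assms dg_aut_arc_iff[OF g] by (auto simp: out_nbhd_def)
  show "out_nbhd E (g u) \<subseteq> g ` out_nbhd E u"
  proof
    fix b assume b: "b \<in> out_nbhd E (g u)"
    then obtain a where "a \<in> V" "g a = b"
      using assms dg_aut_surj[OF g] by (auto simp: out_nbhd_def)
    then show "b \<in> g ` out_nbhd E u"
      using b assms dg_aut_arc_iff[OF g] by (auto simp: out_nbhd_def)
  qed
qed

lemma C3_blowup_out_nbhd_dg_aut:
  assumes g: "dg_aut V E g" and "E \<subseteq> V \<times> V" "u \<in> V"
    and "C3_blowup E (out_nbhd E (g u)) n"
  shows "C3_blowup E (out_nbhd E u) n"
proof -
  have sub: "out_nbhd E u \<subseteq> V"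
    using assms by (auto simp: out_nbhd_def)
  then have "bij_betw g (out_nbhd E u) (out_nbhd E (g u))"
    using dg_aut_out_nbhd[OF assms(1-3)] dg_aut_inj[OF g] by (simp add: bij_betw_def inj_on_subset)
  moreover have "(a, b) \<in> induced E (out_nbhd E u) \<longleftrightarrow>
      (g a, g b) \<in> induced E (out_nbhd E (g u))" if "a \<in> out_nbhd E u" "b \<in> out_nbhd E u" for a b
  proof -
    have "a \<in> V" "b \<in> V" "g a \<in> out_nbhd E (g u)" "g b \<in> out_nbhd E (g u)"
      using that sub dg_aut_out_nbhd[OF assms(1-3)] by auto
    then show ?thesis
      using that dg_aut_arc_iff[OF g] by (simp add: induced_def)
  qed
  ultimately have "dg_iso (out_nbhd E u) (induced E (out_nbhd E u))
      (out_nbhd E (g u)) (induced E (out_nbhd E (g u))) g"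
    by (simp add: dg_iso_def)
  then show ?thesis
    using C3_blowup_dg_iso assms(4) C3_blowup_induced by metis
qed

lemma dg_connected_if_root:
  assumes "c \<in> A" "\<forall>p\<in>A. (c, p) \<in> (R \<union> R\<inverse>)\<^sup>*"
  shows "dg_connected A R"
  unfolding dg_connected_def
proof (intro ballI)
  fix p q assume "p \<in> A" "q \<in> A"
  have "(p, c) \<in> ((R \<union> R\<inverse>)\<inverse>)\<^sup>*"
    using assms \<open>p \<in> A\<close> by (simp add: rtrancl_converseI)
  also have "(R \<union> R\<inverse>)\<inverse> = R \<union> R\<inverse>"
    by auto
  finally show "(p, q) \<in> (R \<union> R\<inverse>)\<^sup>*"
    using assms \<open>q \<in> A\<close> rtrancl_trans by fastforce
qed

lemma C_homogeneousD:
  assumes "C_homogeneous V E" "A \<subseteq> V" "B \<subseteq> V" "finite A" "dg_connected A (induced E A)"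
    "dg_connected B (induced E B)" "dg_iso A (induced E A) B (induced E B) f"
  shows "\<exists>g. dg_aut V E g \<and> (\<forall>x\<in>A. g x = f x)"
  using assms unfolding C_homogeneous_def dg_aut_def by blast

lemma C_homogeneous_vertex_transitive:
  assumes "C_homogeneous V E" "is_digraph V E" "a \<in> V" "b \<in> V"
  shows "\<exists>g. dg_aut V E g \<and> g a = b"
proof -
  have conn: "dg_connected {z} (induced E {z})" for z
    by (rule dg_connected_if_root) auto
  have "dg_iso {a} (induced E {a}) {b} (induced E {b}) (\<lambda>_. b)"
    using assms(2) by (auto simp: dg_iso_def bij_betw_def induced_def is_digraph_def)
  then show ?thesis
    using C_homogeneousD[OF assms(1) _ _ _ conn conn] assms(3,4) by auto
qed

lemma C_homogeneous_arc_transitive: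
  assumes "C_homogeneous V E" "is_digraph V E" "(a, b) \<in> E" "(a', b') \<in> E"
  shows "\<exists>g. dg_aut V E g \<and> g a = a' \<and> g b = b'"
proof -
  have conn: "dg_connected {p, q} (induced E {p, q})" if "(p, q) \<in> E" for p q
    by (rule dg_connected_if_root[of p]) (auto simp: induced_def that)
  define f where "f z = (if z = a then a' else b')" for z
  have "a \<noteq> b" "a' \<noteq> b'"
    using assms(2-4) by (auto simp: is_digraph_def)
  then have iso: "dg_iso {a, b} (induced E {a, b}) {a', b'} (induced E {a', b'}) f"
    using assms(2-4) unfolding dg_iso_def bij_betw_def inj_on_def is_digraph_def
    by (auto simp: f_def induced_def)
  have "{a, b} \<subseteq> V" "{a', b'} \<subseteq> V"
    using assms(2-4) by (auto simp: is_digraph_def)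
  then obtain g where "dg_aut V E g" "g a = f a" "g b = f b"
    using C_homogeneousD[OF assms(1) _ _ _ conn[OF assms(3)] conn[OF assms(4)] iso] by auto
  then show ?thesis
    using \<open>a \<noteq> b\<close> by (auto simp: f_def)
qed

lemma C_homogeneous_triangle_transitive:
  assumes "C_homogeneous V E" "is_digraph V E" "(s, s') \<in> E"
    "(s', b) \<in> E" "(b, s) \<in> E" "(s', b') \<in> E" "(b', s) \<in> E"
  shows "\<exists>g. dg_aut V E g \<and> g s = s \<and> g s' = s' \<and> g b = b'"
proof -
  have conn: "dg_connected {s, s', c} (induced E {s, s', c})" if "(s', c) \<in> E" "(c, s) \<in> E" for c
  proof (rule dg_connected_if_root[of s])
    let ?R = "induced E {s, s', c}"
    have "(s, s') \<in> (?R \<union> ?R\<inverse>)\<^sup>*" "(s', c) \<in> (?R \<union> ?R\<inverse>)\<^sup>*"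
      using assms(3) that by (auto simp: induced_def)
    then show "\<forall>p\<in>{s, s', c}. (s, p) \<in> (?R \<union> ?R\<inverse>)\<^sup>*"
      using rtrancl_trans by fastforce
  qed simp
  define f where "f z = (if z = b then b' else z)" for z
  have "s \<noteq> s'" "b \<noteq> s" "b \<noteq> s'" "b' \<noteq> s" "b' \<noteq> s'"
    using assms(2-7) unfolding is_digraph_def by metis+
  then have iso: "dg_iso {s, s', b} (induced E {s, s', b}) {s, s', b'} (induced E {s, s', b'}) f"
    using assms(2-7) unfolding dg_iso_def bij_betw_def inj_on_def is_digraph_def
    by (auto simp: f_def induced_def)
  have "{s, s', b} \<subseteq> V" "{s, s', b'} \<subseteq> V"
    using assms(2-7) by (auto simp: is_digraph_def)
  then obtain g where "dg_aut V E g" "g s = f s" "g s' = f s'" "g b = f b"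
    using C_homogeneousD[OF assms(1) _ _ _ conn[OF assms(4,5)] conn[OF assms(6,7)] iso] by auto
  then show ?thesis
    using \<open>b \<noteq> s\<close> \<open>b \<noteq> s'\<close> by (auto simp: f_def)
qed

lemma reach_dg_aut:
  assumes g: "dg_aut V E g" and "E \<subseteq> V \<times> V" "a \<in> V" "b \<in> E\<^sup>* `` {a}"
  shows "g b \<in> E\<^sup>* `` {g a}"
proof -
  have "(a, b) \<in> E\<^sup>*"
    using assms(4) by simp
  then have "(g a, g b) \<in> E\<^sup>*"
  proof (induction rule: rtrancl_induct)
    case (step c d)
    then have "(g c, g d) \<in> E"
      using assms(2) dg_aut_arc_iff[OF g] by blast
    with step.IH show ?case
      by (rule rtrancl_into_rtrancl)
  qed simp
  then show ?thesis
    by simp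
qed

lemma reach_subset:
  assumes "E \<subseteq> V \<times> V" "a \<in> V"
  shows "E\<^sup>* `` {a} \<subseteq> V"
proof
  fix b assume "b \<in> E\<^sup>* `` {a}"
  then have "(a, b) \<in> E\<^sup>*"
    by simp
  then show "b \<in> V"
    by (induction rule: rtrancl_induct) (use assms in auto)
qed

lemma card_reach_le_dg_aut:
  assumes g: "dg_aut V E g" and sub: "E \<subseteq> V \<times> V" and u: "u \<in> V"
    and fin: "finite (E\<^sup>* `` {g u})"
  shows "finite (E\<^sup>* `` {u})" "card (E\<^sup>* `` {u}) \<le> card (E\<^sup>* `` {g u})"
proof -
  have "g ` (E\<^sup>* `` {u}) \<subseteq> E\<^sup>* `` {g u}" "inj_on g (E\<^sup>* `` {u})"
    using reach_dg_aut[OF g sub u] dg_aut_inj[OF g] reach_subset[OF sub u]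
    by (auto intro: inj_on_subset)
  then show "finite (E\<^sup>* `` {u})" "card (E\<^sup>* `` {u}) \<le> card (E\<^sup>* `` {g u})"
    using fin card_inj_on_le finite_imageD finite_subset by metis+
qed

text \<open>In a connected vertex-transitive digraph all forward reachability sets have the same size,
  so if one of them is finite, an arc \<open>u \<rightarrow> v\<close> forces the reachability sets of
  \<open>u\<close> and \<open>v\<close> to coincide: the digraph is strongly connected.\<close>

lemma vertex_transitive_connected_eq_reach:
  assumes sub: "E \<subseteq> V \<times> V" and conn: "dg_connected V E"
    and trans: "\<forall>a\<in>V. \<forall>b\<in>V. \<exists>g. dg_aut V E g \<and> g a = b"
    and x: "x \<in> V" and fin: "finite (E\<^sup>* `` {x})"
  shows "V = E\<^sup>* `` {x}"
proof -
  have same_card: "finite (E\<^sup>* `` {u}) \<and> card (E\<^sup>* `` {u}) = card (E\<^sup>* `` {x})" if u: "u \<in> V" for u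
  proof -
    obtain g h where g: "dg_aut V E g" "g u = x" and h: "dg_aut V E h" "h x = u"
      using trans u x by meson
    have "finite (E\<^sup>* `` {u})" "card (E\<^sup>* `` {u}) \<le> card (E\<^sup>* `` {x})"
      using card_reach_le_dg_aut[OF g(1) sub u] g(2) fin by simp_all
    moreover have "card (E\<^sup>* `` {x}) \<le> card (E\<^sup>* `` {u})"
      using card_reach_le_dg_aut[OF h(1) sub x] h(2) calculation(1) by simp
    ultimately show ?thesis
      by simp
  qed
  have backward: "u \<in> E\<^sup>* `` {v}" if "(u, v) \<in> E" for u v
  proof -
    have "u \<in> V" "v \<in> V"
      using that sub by auto
    moreover have "E\<^sup>* `` {v} \<subseteq> E\<^sup>* `` {u}"
      using that by (auto intro: converse_rtrancl_into_rtrancl)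
    ultimately have "E\<^sup>* `` {v} = E\<^sup>* `` {u}"
      using same_card by (metis card_subset_eq)
    then show ?thesis
      by auto
  qed
  have "v \<in> E\<^sup>* `` {x}" if "v \<in> V" for v
  proof -
    have "(x, v) \<in> (E \<union> E\<inverse>)\<^sup>*"
      using conn x that by (simp add: dg_connected_def)
    then show ?thesis
    proof (induction rule: rtrancl_induct)
      case (step b c)
      then show ?case
        using backward[of c b] by (auto intro: rtrancl_trans)
    qed simp
  qed
  then show ?thesis
    using reach_subset[OF sub x] by blast
qed

section \<open>Lexicographic products with an edgeless digraph\<close>

lemma partition_labelling:
  fixes C :: "'i \<Rightarrow> 'a set"
  assumes V: "V = (\<Union>h\<in>I. C h)"
    and card: "\<And>h. h \<in> I \<Longrightarrow> finite (C h) \<and> card (C h) = n"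
    and disj: "\<And>h h'. h \<in> I \<Longrightarrow> h' \<in> I \<Longrightarrow> h \<noteq> h' \<Longrightarrow> C h \<inter> C h' = {}"
  obtains \<phi> where "bij_betw \<phi> V (I \<times> {..<n})" "\<And>h v. h \<in> I \<Longrightarrow> v \<in> C h \<Longrightarrow> fst (\<phi> v) = h"
proof -
  define \<beta> where "\<beta> h = (SOME b. bij_betw b (C h) {..<n})" for h
  have \<beta>: "bij_betw (\<beta> h) (C h) {..<n}" if "h \<in> I" for h
  proof -
    have "\<exists>b. bij_betw b (C h) {..<n}"
      using card[OF that] finite_same_card_bij[of "C h" "{..<n}"] by simp
    then show ?thesis
      unfolding \<beta>_def by (rule someI_ex)
  qed
  define lab where "lab v = (THE h. h \<in> I \<and> v \<in> C h)" for v
  have lab: "lab v = h" if "h \<in> I" "v \<in> C h" for v h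
    unfolding lab_def using that disj by blast
  define \<phi> where "\<phi> v = (lab v, \<beta> (lab v) v)" for v
  have \<phi>: "\<phi> v = (h, \<beta> h v) \<and> \<beta> h v < n" if "h \<in> I" "v \<in> C h" for v h
    using lab[OF that] \<beta>[OF that(1)] that(2) bij_betwE by (fastforce simp: \<phi>_def)
  have "inj_on \<phi> V"
  proof (rule inj_onI)
    fix v w assume "v \<in> V" "w \<in> V" and eq: "\<phi> v = \<phi> w"
    then obtain h h' where v: "h \<in> I" "v \<in> C h" and w: "h' \<in> I" "w \<in> C h'"
      using V by blast
    then have "h = h'" "\<beta> h v = \<beta> h w"
      using \<phi>[OF v] \<phi>[OF w] eq by auto
    then show "v = w"
      using \<beta>[OF v(1)] v w by (auto simp: bij_betw_def inj_on_def)
  qed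
  moreover have "\<phi> ` V = I \<times> {..<n}"
  proof
    show "\<phi> ` V \<subseteq> I \<times> {..<n}"
      using V \<phi> by auto
    show "I \<times> {..<n} \<subseteq> \<phi> ` V"
    proof
      fix p assume "p \<in> I \<times> {..<n}"
      then obtain h m where p: "p = (h, m)" "h \<in> I" "m < n"
        by auto
      then obtain v where v: "v \<in> C h" "\<beta> h v = m"
        using \<beta>[OF p(2)] by (metis bij_betw_iff_bijections lessThan_iff)
      then have "v \<in> V" "\<phi> v = p"
        using V \<phi>[OF p(2) v(1)] p by auto
      then show "p \<in> \<phi> ` V"
        by blast
    qed
  qed
  ultimately show ?thesis
    using that \<phi> by (simp add: bij_betw_def)
qed

lemma dg_isomorphic_lex_Kbar_if_partition:
  fixes C :: "'i \<Rightarrow> 'a set"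
  assumes V: "V = (\<Union>h\<in>I. C h)"
    and card: "\<And>h. h \<in> I \<Longrightarrow> finite (C h) \<and> card (C h) = n"
    and disj: "\<And>h h'. h \<in> I \<Longrightarrow> h' \<in> I \<Longrightarrow> h \<noteq> h' \<Longrightarrow> C h \<inter> C h' = {}"
    and out: "\<And>h u. h \<in> I \<Longrightarrow> u \<in> C h \<Longrightarrow> out_nbhd E u = (\<Union>h'\<in>{h' \<in> I. (h, h') \<in> F}. C h')"
  shows "dg_isomorphic V E (lex_V I (Kbar_V n)) (lex_E I F (Kbar_V n) Kbar_E)"
proof -
  obtain \<phi> where bij: "bij_betw \<phi> V (I \<times> {..<n})"
    and lab: "\<And>h v. h \<in> I \<Longrightarrow> v \<in> C h \<Longrightarrow> fst (\<phi> v) = h"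
    using partition_labelling[OF V card disj] by blast
  have "(u, v) \<in> E \<longleftrightarrow> (\<phi> u, \<phi> v) \<in> lex_E I F (Kbar_V n) Kbar_E"
    if uv: "u \<in> V" "v \<in> V" for u v
  proof -
    obtain h where h: "h \<in> I" "u \<in> C h"
      using V uv(1) by blast
    obtain h' where h': "h' \<in> I" "v \<in> C h'"
      using V uv(2) by blast
    have "(u, v) \<in> E \<longleftrightarrow> (\<exists>h''\<in>I. (h, h'') \<in> F \<and> v \<in> C h'')"
      using out[OF h] by (auto simp: out_nbhd_def)
    also have "\<dots> \<longleftrightarrow> (h, h') \<in> F"
      using h' disj by blast
    also have "\<dots> \<longleftrightarrow> (\<phi> u, \<phi> v) \<in> lex_E I F (Kbar_V n) Kbar_E"
      using lab[OF h] lab[OF h'] bij_betwE[OF bij] uv h h'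
      by (cases "\<phi> u", cases "\<phi> v") (auto simp: lex_E_def Kbar_V_def Kbar_E_def)
    finally show ?thesis .
  qed
  then show ?thesis
    using bij unfolding dg_isomorphic_def dg_iso_def lex_V_def Kbar_V_def by blast
qed

lemma dg_iso_lex_Kbar:
  assumes "dg_iso A R B Q p"
  shows "dg_iso (lex_V A (Kbar_V n)) (lex_E A R (Kbar_V n) Kbar_E)
    (lex_V B (Kbar_V n)) (lex_E B Q (Kbar_V n) Kbar_E) (\<lambda>(h, m). (p h, m))"
proof -
  have bij: "bij_betw p A B" and arcs: "\<forall>a\<in>A. \<forall>b\<in>A. (a, b) \<in> R \<longleftrightarrow> (p a, p b) \<in> Q"
    using assms by (simp_all add: dg_iso_def)
  have "bij_betw (\<lambda>(h, m). (p h, m)) (A \<times> {..<n}) (B \<times> {..<n})"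
    using bij_betw_map_prod[OF bij bij_betw_id[of "{..<n}"]] by (simp add: map_prod_def)
  moreover have "(a, b) \<in> R \<longleftrightarrow> (p a, p b) \<in> Q" "p a \<in> B" "p b \<in> B"
    if "a \<in> A" "b \<in> A" for a b
    using arcs bij_betwE[OF bij] that by auto
  ultimately show ?thesis
    unfolding dg_iso_def lex_V_def lex_E_def Kbar_V_def Kbar_E_def by auto
qed

lemma lex_Kbar_converse: "(lex_E A R (Kbar_V n) Kbar_E)\<inverse> = lex_E A (R\<inverse>) (Kbar_V n) Kbar_E"
  by (auto simp: lex_E_def Kbar_E_def)

section \<open>Reversing all arcs\<close>

lemma dg_connected_converse: "dg_connected A (R\<inverse>) \<longleftrightarrow> dg_connected A R"
proof -
  have "R\<inverse> \<union> (R\<inverse>)\<inverse> = R \<union> R\<inverse>"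
    by auto
  then show ?thesis
    unfolding dg_connected_def by simp
qed

lemma dg_iso_converse_left: "dg_iso A (R\<inverse>) B Q f \<longleftrightarrow> dg_iso A R B (Q\<inverse>) f"
  unfolding dg_iso_def by auto

lemma dg_iso_converse: "dg_iso A (R\<inverse>) B (Q\<inverse>) f \<longleftrightarrow> dg_iso A R B Q f"
  using dg_iso_converse_left[of A R B "Q\<inverse>" f] by simp

lemma induced_converse: "induced (R\<inverse>) A = (induced R A)\<inverse>"
  unfolding induced_def by auto

lemma C_homogeneous_converse:
  assumes "C_homogeneous V E"
  shows "C_homogeneous V (E\<inverse>)"
  unfolding C_homogeneous_def
proof (intro allI impI)
  fix A B f
  assume "A \<subseteq> V \<and> B \<subseteq> V \<and> finite A \<and> dg_connected A (induced (E\<inverse>) A) \<and>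
    dg_connected B (induced (E\<inverse>) B) \<and> dg_iso A (induced (E\<inverse>) A) B (induced (E\<inverse>) B) f"
  then have "A \<subseteq> V" "B \<subseteq> V" "finite A" "dg_connected A (induced E A)" "dg_connected B (induced E B)"
    "dg_iso A (induced E A) B (induced E B) f"
    by (simp_all add: induced_converse dg_connected_converse dg_iso_converse)
  then obtain g where "dg_aut V E g" "\<forall>x\<in>A. g x = f x"
    using C_homogeneousD[OF assms] by blast
  then show "\<exists>g. dg_iso V (E\<inverse>) V (E\<inverse>) g \<and> (\<forall>x\<in>A. g x = f x)"
    by (auto simp: dg_aut_def dg_iso_converse)
qed

lemma is_digraph_converse: "is_digraph V E \<Longrightarrow> is_digraph V (E\<inverse>)"
  unfolding is_digraph_def by auto

lemma out_nbhd_converse: "out_nbhd (E\<inverse>) x = in_nbhd E x"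
  by (auto simp: out_nbhd_def in_nbhd_def)

lemma H_antiautomorphism: "dg_iso H_V (H_E\<inverse>) H_V H_E (\<lambda>h. [0, 1, 3, 2, 7, 6, 5, 4] ! h)"
  unfolding dg_iso_def bij_betw_def H_V_def H_E_def by code_simp

lemma H_V_cases: "h \<in> H_V \<Longrightarrow> h = 0 \<or> h = 1 \<or> h = 2 \<or> h = 3 \<or> h = 4 \<or> h = 5 \<or> h = 6 \<or> h = 7"
  by (auto simp: H_V_def)

section \<open>Digraphs whose out-neighbourhoods are blow-ups of the directed triangle\<close>

lemma Int_empty_sym: "A \<inter> B = {} \<Longrightarrow> B \<inter> A = {}"
  by blast

lemma card_Un3_disjoint:
  assumes "finite A" "finite B" "finite C" "A \<inter> B = {}" "A \<inter> C = {}" "B \<inter> C = {}"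
    "card A = n" "card B = n" "card C = n"
  shows "card (A \<union> B \<union> C) = 3 * n"
proof -
  have "(A \<union> B) \<inter> C = {}"
    using assms(5,6) by blast
  then show ?thesis
    using card_Un_disjoint[OF finite_UnI[OF assms(1,2)] assms(3)] card_Un_disjoint[OF assms(1,2,4)]
      assms(7-9) by simp
qed

lemma out_nbhd_iff [simp]: "a \<in> out_nbhd E u \<longleftrightarrow> (u, a) \<in> E"
  by (simp add: out_nbhd_def)

lemma in_nbhd_iff [simp]: "a \<in> in_nbhd E u \<longleftrightarrow> (a, u) \<in> E"
  by (simp add: in_nbhd_def)

locale C3_blowup_nbhds =
  fixes V :: "'a set" and E :: "('a \<times> 'a) set" and n :: nat and x0 :: 'a
  assumes digraph: "is_digraph V E" and C_hom: "C_homogeneous V E" and n_pos: "n \<ge> 1"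
    and x0_in_V: "x0 \<in> V" and out_nbhd_x0: "C3_blowup E (out_nbhd E x0) n"
begin

abbreviation N :: "'a \<Rightarrow> 'a set" where
  "N \<equiv> out_nbhd E"

lemma irrefl: "(a, a) \<notin> E"
  using digraph by (simp add: is_digraph_def)

lemma asym: "(a, b) \<in> E \<Longrightarrow> (b, a) \<notin> E"
  using digraph by (simp add: is_digraph_def)

lemma arc_in_V: "(a, b) \<in> E \<Longrightarrow> a \<in> V" "(a, b) \<in> E \<Longrightarrow> b \<in> V"
  using digraph by (auto simp: is_digraph_def)

lemma arcs_subset: "E \<subseteq> V \<times> V"
  using digraph by (simp add: is_digraph_def)

lemma vertex_transitive: "a \<in> V \<Longrightarrow> b \<in> V \<Longrightarrow> \<exists>g. dg_aut V E g \<and> g a = b"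
  using C_homogeneous_vertex_transitive[OF C_hom digraph] .

lemma C3_blowup_out_nbhd:
  assumes "u \<in> V"
  shows "C3_blowup E (N u) n"
proof -
  obtain g where "dg_aut V E g" "g u = x0"
    using vertex_transitive[OF assms x0_in_V] by blast
  then show ?thesis
    using C3_blowup_out_nbhd_dg_aut[OF _ arcs_subset assms] out_nbhd_x0 by simp
qed

definition col :: "'a \<Rightarrow> 'a \<Rightarrow> nat" where
  "col u = (SOME f. C3_colouring E (N u) n f)"

definition cls :: "'a \<Rightarrow> nat \<Rightarrow> 'a set" where
  "cls u c = {a \<in> N u. col u a = c}"

definition block :: "'a \<Rightarrow> 'a \<Rightarrow> 'a set" where
  "block u a = cls u (col u a)"

lemma C3_colouring_col:
  assumes "u \<in> V"
  shows "C3_colouring E (N u) n (col u)"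
proof -
  have "\<exists>f. C3_colouring E (N u) n f"
    using C3_blowup_out_nbhd[OF assms] by (simp add: C3_blowup_def)
  then show ?thesis
    unfolding col_def by (rule someI_ex)
qed

lemma finite_out_nbhd: "u \<in> V \<Longrightarrow> finite (N u)"
  using C3_blowup_out_nbhd by (simp add: C3_blowup_def)

lemma mem_cls: "a \<in> cls u c \<longleftrightarrow> (u, a) \<in> E \<and> col u a = c"
  by (simp add: cls_def)

lemma col_less:
  assumes "(u, a) \<in> E"
  shows "col u a < 3"
proof -
  have "a \<in> N u"
    using assms by simp
  then show ?thesis
    using C3_colouring_col[OF arc_in_V(1)[OF assms]] unfolding C3_colouring_def by blast
qed

lemma arc_iff_col:
  assumes "(u, a) \<in> E" "(u, b) \<in> E"
  shows "(a, b) \<in> E \<longleftrightarrow> col u b = succ3 (col u a)"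
proof -
  have "a \<in> N u" "b \<in> N u"
    using assms by simp_all
  then show ?thesis
    using C3_colouring_col[OF arc_in_V(1)[OF assms(1)]] unfolding C3_colouring_def by blast
qed

lemma card_cls: "u \<in> V \<Longrightarrow> c < 3 \<Longrightarrow> card (cls u c) = n"
  using C3_colouring_col[of u] unfolding C3_colouring_def cls_def by blast

lemma finite_cls:
  assumes "u \<in> V"
  shows "finite (cls u c)"
proof -
  have "cls u c \<subseteq> N u"
    by (auto simp: cls_def)
  then show ?thesis
    using finite_out_nbhd[OF assms] finite_subset by blast
qed

lemma cls_nonempty:
  assumes "u \<in> V" "c < 3"
  shows "\<exists>a. a \<in> cls u c"
proof -
  have "card (cls u c) \<noteq> 0"
    using card_cls[OF assms] n_pos by simp
  then show ?thesis
    by (metis card.empty ex_in_conv)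
qed

lemma cls_disjoint: "c \<noteq> d \<Longrightarrow> cls u c \<inter> cls u d = {}"
  by (auto simp: cls_def)

lemma out_nbhd_cls:
  assumes "u \<in> V" "c < 3"
  shows "N u = cls u c \<union> cls u (succ3 c) \<union> cls u (succ3 (succ3 c))"
proof
  show "N u \<subseteq> cls u c \<union> cls u (succ3 c) \<union> cls u (succ3 (succ3 c))"
  proof
    fix a assume "a \<in> N u"
    then have "(u, a) \<in> E"
      by simp
    then show "a \<in> cls u c \<union> cls u (succ3 c) \<union> cls u (succ3 (succ3 c))"
      using succ3_cases[OF assms(2) col_less] unfolding mem_cls Un_iff by blast
  qed
  show "cls u c \<union> cls u (succ3 c) \<union> cls u (succ3 (succ3 c)) \<subseteq> N u"
    unfolding cls_def by blast
qed

lemma no_arc_in_cls: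
  assumes "a \<in> cls u c" "b \<in> cls u c"
  shows "(a, b) \<notin> E"
proof -
  have "(u, a) \<in> E" "(u, b) \<in> E" "col u b = col u a"
    using assms by (auto simp: mem_cls)
  then show ?thesis
    using arc_iff_col succ3_neq[OF col_less] by metis
qed

lemma arc_cls_succ3: "a \<in> cls u c \<Longrightarrow> b \<in> cls u (succ3 c) \<Longrightarrow> (a, b) \<in> E"
  using arc_iff_col[of u a b] by (simp add: mem_cls)

lemma cls_eq_if_subset: "u \<in> V \<Longrightarrow> c < 3 \<Longrightarrow> A \<subseteq> cls u c \<Longrightarrow> card A = n \<Longrightarrow> A = cls u c"
  using card_subset_eq[OF finite_cls] card_cls by metis

lemma col_eq_if_nonadjacent:
  assumes "(u, a) \<in> E" "(u, b) \<in> E" "(a, b) \<notin> E" "(b, a) \<notin> E"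
  shows "col u a = col u b"
  using succ3_trichotomy[OF col_less[OF assms(1)] col_less[OF assms(2)]] assms(3,4)
    arc_iff_col[OF assms(1,2)] arc_iff_col[OF assms(2,1)] by metis

lemma mem_block_self: "(u, a) \<in> E \<Longrightarrow> a \<in> block u a"
  by (simp add: block_def mem_cls)

lemma block_eq_cls: "a \<in> cls u c \<Longrightarrow> block u a = cls u c"
  by (simp add: block_def mem_cls)

lemma block_eq_if_independent:
  assumes "u \<in> V" "A \<subseteq> N u" "card A = n" "\<forall>p\<in>A. \<forall>q\<in>A. (p, q) \<notin> E" "a \<in> A"
  shows "A = block u a"
proof -
  have "A \<subseteq> block u a"
  proof
    fix b assume "b \<in> A"
    then have "(u, a) \<in> E" "(u, b) \<in> E"
      using assms(2,5) by auto
    then have "col u a = col u b"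
      using assms(4,5) \<open>b \<in> A\<close> col_eq_if_nonadjacent[of u a b] by metis
    then show "b \<in> block u a"
      using \<open>b \<in> A\<close> assms(2) by (auto simp: block_def mem_cls)
  qed
  moreover have "(u, a) \<in> E"
    using assms(2,5) by auto
  ultimately show ?thesis
    using cls_eq_if_subset[OF assms(1) col_less] assms(3) unfolding block_def by blast
qed

lemma inter_out_nbhd:
  assumes "(u, a) \<in> E"
  shows "N u \<inter> N a = cls u (succ3 (col u a))"
proof -
  have "(a, b) \<in> E \<longleftrightarrow> col u b = succ3 (col u a)" if "(u, b) \<in> E" for b
    using arc_iff_col[OF assms that] .
  then show ?thesis
    unfolding cls_def out_nbhd_def by blast
qed

lemma inter_in_nbhd:
  assumes "(u, a) \<in> E"
  shows "N u \<inter> in_nbhd E a = cls u (succ3 (succ3 (col u a)))"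
proof -
  have "(b, a) \<in> E \<longleftrightarrow> col u b = succ3 (succ3 (col u a))" if "(u, b) \<in> E" for b
    using arc_iff_col[OF that assms] succ3_eq_iff[OF col_less[OF assms] col_less[OF that]] by simp
  then show ?thesis
    unfolding cls_def out_nbhd_def in_nbhd_def by blast
qed

lemma out_nbhd_split:
  assumes "(u, a) \<in> E"
  shows "N u = block u a \<union> (N u \<inter> N a) \<union> (N u \<inter> in_nbhd E a)"
  using out_nbhd_cls[OF arc_in_V(1) col_less, OF assms assms] inter_out_nbhd[OF assms]
    inter_in_nbhd[OF assms] by (simp add: block_def)

lemma common_out_nbhd_block_left:
  assumes "(u, v) \<in> E" "w \<in> N u \<inter> N v"
  shows "N u \<inter> N v = block u w"
  using inter_out_nbhd[OF assms(1)] block_eq_cls[of w u] assms(2) by simp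

lemma common_out_nbhd_block_right:
  assumes "(u, v) \<in> E" "(u, w) \<in> E" "(v, w) \<in> E"
  shows "N u \<inter> N v = block v w"
proof (rule block_eq_if_independent)
  show "v \<in> V" "N u \<inter> N v \<subseteq> N v" "w \<in> N u \<inter> N v"
    using assms arc_in_V(2)[OF assms(1)] by auto
  have eq: "N u \<inter> N v = cls u (succ3 (col u v))"
    using inter_out_nbhd[OF assms(1)] .
  then show "card (N u \<inter> N v) = n"
    using card_cls[OF arc_in_V(1)[OF assms(1)] succ3_less] by simp
  show "\<forall>p\<in>N u \<inter> N v. \<forall>q\<in>N u \<inter> N v. (p, q) \<notin> E"
    unfolding eq using no_arc_in_cls by blast
qed

lemma common_in_neighbour:
  assumes "(s, s') \<in> E"
  obtains v where "(v, s) \<in> E" "(v, s') \<in> E"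
proof -
  obtain a b where a: "a \<in> cls x0 0" and b: "b \<in> cls x0 (succ3 0)"
    using cls_nonempty[OF x0_in_V zero_less_numeral] cls_nonempty[OF x0_in_V succ3_less, of 0] by blast
  have xa: "(x0, a) \<in> E" "(x0, b) \<in> E"
    using a b by (simp_all add: mem_cls)
  have ab: "(a, b) \<in> E"
    using arc_cls_succ3[OF a b] .
  obtain g where g: "dg_aut V E g" "g a = s" "g b = s'"
    using C_homogeneous_arc_transitive[OF C_hom digraph ab assms] by blast
  have "(g x0, g a) \<in> E" "(g x0, g b) \<in> E"
    using xa dg_aut_arc_iff[OF g(1) x0_in_V] arc_in_V(2) by blast+
  then show ?thesis
    using that g(2,3) by blast
qed

lemma common_out_neighbour:
  assumes "(a, b) \<in> E"
  obtains z where "(a, z) \<in> E" "(b, z) \<in> E"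
proof -
  obtain z where "z \<in> cls a (succ3 (col a b))"
    using cls_nonempty[OF arc_in_V(1)[OF assms] succ3_less] by blast
  then have "z \<in> N a \<inter> N b"
    using inter_out_nbhd[OF assms] by simp
  then show ?thesis
    using that by auto
qed

lemma card_inter_out_nbhd: "(u, a) \<in> E \<Longrightarrow> card (N u \<inter> N a) = n"
  using inter_out_nbhd card_cls[OF arc_in_V(1) succ3_less] by simp

lemma card_inter_in_nbhd: "(u, a) \<in> E \<Longrightarrow> card (N u \<inter> in_nbhd E a) = n"
  using inter_in_nbhd card_cls[OF arc_in_V(1) succ3_less] by simp

lemma card_out_nbhd:
  assumes "u \<in> V"
  shows "card (N u) = 3 * n"
proof -
  have "N u = cls u 0 \<union> cls u 1 \<union> cls u 2"
    using out_nbhd_cls[OF assms zero_less_numeral] by simp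
  moreover have "card (cls u 0 \<union> cls u 1 \<union> cls u 2) = 3 * n"
    by (rule card_Un3_disjoint) (simp_all add: finite_cls[OF assms] card_cls[OF assms] cls_disjoint)
  ultimately show ?thesis
    by simp
qed

section \<open>Vertices closing a directed triangle on an arc\<close>

definition closers :: "'a \<Rightarrow> 'a \<Rightarrow> 'a set" where
  "closers u w = {y. (w, y) \<in> E \<and> (y, u) \<in> E}"

lemma mem_closers: "y \<in> closers u w \<longleftrightarrow> (w, y) \<in> E \<and> (y, u) \<in> E"
  by (simp add: closers_def)

lemma closers_superset:
  assumes vs: "(v, s) \<in> E" and vs': "(v, s') \<in> E" and ss': "(s, s') \<in> E"
  shows "N v \<inter> in_nbhd E s \<subseteq> closers s s'"
proof
  fix y assume "y \<in> N v \<inter> in_nbhd E s"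
  then have vy: "(v, y) \<in> E" and ys: "(y, s) \<in> E"
    by auto
  have "col v s = succ3 (col v y)"
    using arc_iff_col[OF vy vs] ys by blast
  then have "col v y = succ3 (succ3 (col v s))"
    using succ3_eq_iff[OF col_less[OF vs] col_less[OF vy]] by blast
  moreover have "col v s' = succ3 (col v s)"
    using arc_iff_col[OF vs vs'] ss' by blast
  ultimately have "(s', y) \<in> E"
    using arc_iff_col[OF vs' vy] by simp
  then show "y \<in> closers s s'"
    using ys by (simp add: mem_closers)
qed

lemma closers_nonempty:
  assumes "(s, s') \<in> E"
  shows "\<exists>y. y \<in> closers s s'"
proof -
  obtain v where v: "(v, s) \<in> E" "(v, s') \<in> E"
    using common_in_neighbour[OF assms] by blast
  obtain y where "y \<in> cls v (succ3 (succ3 (col v s)))"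
    using cls_nonempty[OF arc_in_V(1)[OF v(1)] succ3_less] by blast
  then show ?thesis
    using closers_superset[OF v assms] inter_in_nbhd[OF v(1)] by blast
qed

lemma in_neighbour_not_dominated:
  assumes "(y, x) \<in> E"
  shows "\<exists>s\<in>N x. (s, y) \<notin> E"
proof -
  obtain w where "(y, w) \<in> E" "(x, w) \<in> E"
    using common_out_neighbour[OF assms] by blast
  then have "w \<in> N x" "(w, y) \<notin> E"
    using asym by auto
  then show ?thesis
    by blast
qed

definition closers_dominate :: "'a \<Rightarrow> 'a \<Rightarrow> bool" where
  "closers_dominate s s' \<longleftrightarrow> (\<forall>y\<in>closers s s'. \<forall>w\<in>N s \<inter> N s'. (y, w) \<in> E)"

text \<open>The stabiliser of the arc acts transitively on its closers.\<close>

lemma closers_dominate_if_one_dominates: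
  assumes ss': "(s, s') \<in> E" and y: "y \<in> closers s s'" and dom: "\<forall>w\<in>N s \<inter> N s'. (y, w) \<in> E"
  shows "closers_dominate s s'"
  unfolding closers_dominate_def
proof (intro ballI)
  fix y0 w0 assume y0: "y0 \<in> closers s s'" and w0: "w0 \<in> N s \<inter> N s'"
  have tri: "(s', y) \<in> E" "(y, s) \<in> E" "(s', y0) \<in> E" "(y0, s) \<in> E"
    using y y0 by (simp_all add: mem_closers)
  obtain g where g: "dg_aut V E g" "g s = s" "g s' = s'" "g y = y0"
    using C_homogeneous_triangle_transitive[OF C_hom digraph ss' tri] by blast
  have V: "s \<in> V" "s' \<in> V" "y \<in> V" "w0 \<in> V"
    using arc_in_V ss' tri(1) w0 by auto
  obtain w1 where w1: "w1 \<in> V" "g w1 = w0"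
    using dg_aut_surj[OF g(1) V(4)] by blast
  have "(s, w1) \<in> E" "(s', w1) \<in> E"
    using dg_aut_arc_iff[OF g(1) V(1) w1(1)] dg_aut_arc_iff[OF g(1) V(2) w1(1)] g(2,3) w1(2) w0
    by auto
  then have "w1 \<in> N s \<inter> N s'"
    by simp
  then have "(y, w1) \<in> E"
    using dom by blast
  then show "(y0, w0) \<in> E"
    using dg_aut_arc_iff[OF g(1) V(3) w1(1)] g(4) w1(2) by simp
qed

lemma closers_subset_or_dominate:
  assumes ss': "(s, s') \<in> E" and sw: "(s, w) \<in> E" and s'w: "(s', w) \<in> E"
  shows "closers s s' \<subseteq> N s' \<inter> N w \<or> closers_dominate s s'"
proof (rule disjCI, rule subsetI)
  fix y assume not_dom: "\<not> closers_dominate s s'" and y: "y \<in> closers s s'"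
  then have s'y: "(s', y) \<in> E" and ys: "(y, s) \<in> E"
    by (auto simp: mem_closers)
  define c where "c = col s' w"
  have c: "c < 3"
    using col_less[OF s'w] by (simp add: c_def)
  have common: "N s \<inter> N s' = cls s' c"
    using common_out_nbhd_block_right[OF ss' sw s'w] by (simp add: block_def c_def)
  have "col s' y \<noteq> c"
  proof
    assume "col s' y = c"
    then have "(s, y) \<in> E"
      using common s'y by (auto simp: mem_cls)
    then show False
      using ys asym by blast
  qed
  moreover have "col s' y \<noteq> succ3 (succ3 c)"
  proof
    assume "col s' y = succ3 (succ3 c)"
    then have "y \<in> cls s' (succ3 (succ3 c))"
      using s'y by (simp add: mem_cls)
    moreover have "N s \<inter> N s' = cls s' (succ3 (succ3 (succ3 c)))"
      using common succ3_succ3_succ3[OF c] by simp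
    ultimately have "\<forall>w\<in>N s \<inter> N s'. (y, w) \<in> E"
      using arc_cls_succ3 by blast
    then show False
      using closers_dominate_if_one_dominates[OF ss' y] not_dom by blast
  qed
  ultimately have "col s' y = succ3 c"
    using succ3_cases[OF c col_less[OF s'y]] by blast
  then show "y \<in> N s' \<inter> N w"
    using inter_out_nbhd[OF s'w] s'y by (simp add: c_def mem_cls)
qed

lemma closers_dominate_dg_aut:
  assumes g: "dg_aut V E g" and ab: "(a, b) \<in> E" and dom: "closers_dominate a b"
  shows "closers_dominate (g a) (g b)"
  unfolding closers_dominate_def
proof (intro ballI)
  fix y w assume y: "y \<in> closers (g a) (g b)" and w: "w \<in> N (g a) \<inter> N (g b)"
  have arcs: "(g b, y) \<in> E" "(y, g a) \<in> E" "(g a, w) \<in> E" "(g b, w) \<in> E"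
    using y w by (auto simp: mem_closers)
  have V: "a \<in> V" "b \<in> V" "y \<in> V" "w \<in> V"
    using ab arcs arc_in_V by auto
  obtain y1 w1 where y1: "y1 \<in> V" "g y1 = y" and w1: "w1 \<in> V" "g w1 = w"
    using dg_aut_surj[OF g] V(3,4) by metis
  have "(b, y1) \<in> E" "(y1, a) \<in> E" "(a, w1) \<in> E" "(b, w1) \<in> E"
    using arcs y1(2) w1(2) dg_aut_arc_iff[OF g] V y1(1) w1(1) by metis+
  then have "y1 \<in> closers a b" "w1 \<in> N a \<inter> N b"
    by (simp_all add: mem_closers)
  then have "(y1, w1) \<in> E"
    using dom by (simp add: closers_dominate_def)
  then show "(y, w) \<in> E"
    using dg_aut_arc_iff[OF g y1(1) w1(1)] y1 w1 by simp
qed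

text \<open>If closers were never dominating, every closer of an arc from \<open>x0\<close> would also close
  the arcs from \<open>x0\<close> into the next colour class; going round the three classes, a single
  vertex would receive arcs from all of \<open>N x0\<close>, although it has a common out-neighbour with
  \<open>x0\<close>.\<close>

lemma closers_dominate:
  assumes ab: "(a, b) \<in> E"
  shows "closers_dominate a b"
proof (rule ccontr)
  assume "\<not> closers_dominate a b"
  have not_dom: "\<not> closers_dominate s s'" if ss': "(s, s') \<in> E" for s s'
  proof
    assume "closers_dominate s s'"
    moreover obtain g where "dg_aut V E g" "g s = a" "g s' = b"
      using C_homogeneous_arc_transitive[OF C_hom digraph ss' ab] by blast
    ultimately show False
      using closers_dominate_dg_aut ss' \<open>\<not> closers_dominate a b\<close> by metis
  qed
  have next_cls: "\<forall>s\<in>cls x0 (succ3 c). (s, y) \<in> E \<and> y \<in> closers x0 s"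
    if a': "a' \<in> cls x0 c" and y: "y \<in> closers x0 a'" for a' c y
  proof
    fix s assume s: "s \<in> cls x0 (succ3 c)"
    have xa': "(x0, a') \<in> E"
      using a' by (simp add: mem_cls)
    have "s \<in> N x0 \<inter> N a'"
      using inter_out_nbhd[OF xa'] a' s by (simp add: mem_cls)
    then have "(x0, s) \<in> E" "(a', s) \<in> E"
      by simp_all
    then have "y \<in> N a' \<inter> N s"
      using closers_subset_or_dominate[OF xa'] not_dom[OF xa'] y by blast
    then show "(s, y) \<in> E \<and> y \<in> closers x0 s"
      using y by (simp add: mem_closers)
  qed
  obtain a0 y where a0: "a0 \<in> cls x0 0" and y: "y \<in> closers x0 a0"
    using cls_nonempty[OF x0_in_V zero_less_numeral] closers_nonempty by (metis mem_cls)
  obtain s1 s2 where s1: "s1 \<in> cls x0 1" and s2: "s2 \<in> cls x0 2"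
    using cls_nonempty[OF x0_in_V, of 1] cls_nonempty[OF x0_in_V, of 2] by auto
  have "\<forall>s\<in>cls x0 1. (s, y) \<in> E \<and> y \<in> closers x0 s"
    using next_cls[OF a0 y] by simp
  moreover have "\<forall>s\<in>cls x0 2. (s, y) \<in> E \<and> y \<in> closers x0 s"
    using next_cls[OF s1] calculation s1 by simp
  moreover have "\<forall>s\<in>cls x0 0. (s, y) \<in> E \<and> y \<in> closers x0 s"
    using next_cls[OF s2] calculation(2) s2 by simp
  moreover have "N x0 = cls x0 0 \<union> cls x0 1 \<union> cls x0 2"
    using out_nbhd_cls[OF x0_in_V zero_less_numeral] by simp
  ultimately have "\<forall>s\<in>N x0. (s, y) \<in> E"
    by blast
  moreover have "(y, x0) \<in> E"
    using y by (simp add: mem_closers)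
  ultimately show False
    using in_neighbour_not_dominated by blast
qed

lemma closers_eq:
  assumes uw: "(u, w) \<in> E" and uz: "(u, z) \<in> E" and wz: "(w, z) \<in> E"
  shows "closers u w = N w \<inter> in_nbhd E z"
proof -
  obtain v where v: "(v, u) \<in> E" "(v, w) \<in> E"
    using common_in_neighbour[OF uw] by blast
  have sub1: "N v \<inter> in_nbhd E u \<subseteq> closers u w"
    using closers_superset[OF v uw] .
  have sub2: "closers u w \<subseteq> N w \<inter> in_nbhd E z"
  proof
    fix y assume y: "y \<in> closers u w"
    have "z \<in> N u \<inter> N w"
      using uz wz by simp
    then have "(y, z) \<in> E"
      using closers_dominate[OF uw] y unfolding closers_dominate_def by blast
    then show "y \<in> N w \<inter> in_nbhd E z"
      using y by (simp add: mem_closers)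
  qed
  have "finite (N w \<inter> in_nbhd E z)"
    using finite_out_nbhd[OF arc_in_V(1)[OF wz]] by (rule finite_subset[rotated]) blast
  moreover have "card (N v \<inter> in_nbhd E u) = card (N w \<inter> in_nbhd E z)"
    using card_inter_in_nbhd[OF v(1)] card_inter_in_nbhd[OF wz] by simp
  ultimately have "N v \<inter> in_nbhd E u = N w \<inter> in_nbhd E z"
    using card_subset_eq[OF _ subset_trans[OF sub1 sub2]] by blast
  then show ?thesis
    using sub1 sub2 by blast
qed

lemma card_closers:
  assumes "(u, w) \<in> E"
  shows "card (closers u w) = n" "finite (closers u w)"
proof -
  obtain z where z: "(u, z) \<in> E" "(w, z) \<in> E"
    using common_out_neighbour[OF assms] by blast
  show "card (closers u w) = n"
    using closers_eq[OF assms z] card_inter_in_nbhd[OF z(2)] by simp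
  show "finite (closers u w)"
    using closers_eq[OF assms z] finite_out_nbhd[OF arc_in_V(1)[OF z(2)]] by (simp add: finite_subset)
qed

lemma closers_eq_in_common:
  assumes "(v, s) \<in> E" "(v, s') \<in> E" "(s, s') \<in> E"
  shows "closers s s' = N v \<inter> in_nbhd E s"
proof -
  have "card (N v \<inter> in_nbhd E s) = card (closers s s')"
    using card_closers(1)[OF assms(3)] card_inter_in_nbhd[OF assms(1)] by simp
  then show ?thesis
    using card_subset_eq[OF card_closers(2)[OF assms(3)] closers_superset[OF assms]] by simp
qed

lemma out_nbhd_parts:
  assumes uw: "(u, w) \<in> E" and uz: "(u, z) \<in> E" and wz: "(w, z) \<in> E"
  shows "N u \<inter> N w = cls w (col w z)" "N w \<inter> N z = cls w (succ3 (col w z))"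
    "closers u w = cls w (succ3 (succ3 (col w z)))"
  using common_out_nbhd_block_right[OF assms] inter_out_nbhd[OF wz] closers_eq[OF assms]
    inter_in_nbhd[OF wz]
  by (simp_all add: block_def)

lemma out_nbhd_eq_via_arc:
  assumes vs: "(v, s) \<in> E" and vs': "(v, s') \<in> E" and ss': "(s, s') \<in> E"
  shows "N v = block v s \<union> block v s' \<union> closers s s'"
proof -
  have "N v \<inter> N s = block v s'"
    using common_out_nbhd_block_left[OF vs] vs' ss' by simp
  then show ?thesis
    using out_nbhd_split[OF vs] closers_eq_in_common[OF assms] by simp
qed

section \<open>Twins\<close>

lemma out_nbhd_eq_if_blocks_agree:
  assumes as0: "(a, s0) \<in> E" and as1: "(a, s1) \<in> E" and bs0: "(b, s0) \<in> E" and bs1: "(b, s1) \<in> E"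
    and "block a s0 = block b s0" "block a s1 = block b s1" "col a s0 \<noteq> col a s1"
  shows "N a = N b"
proof -
  have "(s0, s1) \<in> E \<or> (s1, s0) \<in> E"
    using col_eq_if_nonadjacent[OF as0 as1] assms(7) by blast
  then show ?thesis
  proof
    assume "(s0, s1) \<in> E"
    then show ?thesis
      using out_nbhd_eq_via_arc[OF as0 as1] out_nbhd_eq_via_arc[OF bs0 bs1] assms(5,6) by simp
  next
    assume "(s1, s0) \<in> E"
    then show ?thesis
      using out_nbhd_eq_via_arc[OF as1 as0] out_nbhd_eq_via_arc[OF bs1 bs0] assms(5,6) by simp
  qed
qed

lemma preceding_cls_same_col:
  assumes a: "a \<in> cls p c" and b: "b \<in> cls p c"
  obtains q where "q \<in> cls p (succ3 (succ3 c))" "(q, a) \<in> E" "(q, b) \<in> E" "col q a = col q b"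
proof -
  have pa: "(p, a) \<in> E" and c: "c < 3"
    using a col_less by (auto simp: mem_cls)
  obtain q where q: "q \<in> cls p (succ3 (succ3 c))"
    using cls_nonempty[OF arc_in_V(1)[OF pa] succ3_less] by blast
  have "a \<in> cls p (succ3 (succ3 (succ3 c)))" "b \<in> cls p (succ3 (succ3 (succ3 c)))"
    using a b succ3_succ3_succ3[OF c] by simp_all
  then have qa: "(q, a) \<in> E" and qb: "(q, b) \<in> E"
    using arc_cls_succ3[OF q] by blast+
  moreover have "col q a = col q b"
    using col_eq_if_nonadjacent[OF qa qb] no_arc_in_cls[OF a b] no_arc_in_cls[OF b a] by blast
  ultimately show ?thesis
    using that q by blast
qed

text \<open>Two vertices \<open>a\<close>, \<open>b\<close> of one colour class of \<open>N p\<close> are also in one class of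
  \<open>N q\<close> for \<open>q\<close> in the preceding class, so \<open>N a\<close> and \<open>N b\<close> share the classes
  \<open>N p \<inter> N a\<close> and \<open>N q \<inter> N a\<close>, which are different classes of \<open>N a\<close>.\<close>

lemma out_nbhd_eq_if_same_cls:
  assumes a: "a \<in> cls p c" and b: "b \<in> cls p c"
  shows "N a = N b"
proof -
  have pa: "(p, a) \<in> E" and pb: "(p, b) \<in> E" and ca: "col p a = c" and cb: "col p b = c"
    using a b by (auto simp: mem_cls)
  have pV: "p \<in> V"
    using arc_in_V(1)[OF pa] .
  obtain q where q: "q \<in> cls p (succ3 (succ3 c))" and qa: "(q, a) \<in> E" and qb: "(q, b) \<in> E"
    and "col q a = col q b"
    using preceding_cls_same_col[OF a b] by blast
  then have Nq: "N q \<inter> N a = N q \<inter> N b"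
    using inter_out_nbhd[OF qa] inter_out_nbhd[OF qb] by simp
  have Np: "N p \<inter> N a = N p \<inter> N b"
    using inter_out_nbhd[OF pa] inter_out_nbhd[OF pb] ca cb by simp
  have Np_cls: "N p \<inter> N a = cls p (succ3 c)"
    using inter_out_nbhd[OF pa] ca by simp
  obtain s0 where s0: "s0 \<in> N p \<inter> N a"
    using cls_nonempty[OF pV succ3_less] Np_cls by blast
  obtain s1 where s1: "s1 \<in> N q \<inter> N a"
    using cls_nonempty[OF arc_in_V(1)[OF qa] succ3_less] inter_out_nbhd[OF qa] by blast
  have s0_arcs: "(p, s0) \<in> E" "(a, s0) \<in> E" "(b, s0) \<in> E"
    using s0 Np by auto
  have s1_arcs: "(q, s1) \<in> E" "(a, s1) \<in> E" "(b, s1) \<in> E"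
    using s1 Nq by auto
  have blocks0: "block a s0 = N p \<inter> N a" "block b s0 = N p \<inter> N a"
    using common_out_nbhd_block_right[OF pa s0_arcs(1,2)] common_out_nbhd_block_right[OF pb s0_arcs(1,3)]
      Np by simp_all
  have blocks1: "block a s1 = N q \<inter> N a" "block b s1 = N q \<inter> N a"
    using common_out_nbhd_block_right[OF qa s1_arcs(1,2)] common_out_nbhd_block_right[OF qb s1_arcs(1,3)]
      Nq by simp_all
  have "col a s0 \<noteq> col a s1"
  proof
    assume "col a s0 = col a s1"
    then have "s1 \<in> block a s0"
      using s1 by (simp add: block_def mem_cls)
    then have "s1 \<in> cls p (succ3 c)"
      using blocks0 Np_cls by simp
    then have "(s1, q) \<in> E"
      using arc_cls_succ3[OF _ q] by blast
    then show False
      using s1 asym by auto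
  qed
  then show ?thesis
    using out_nbhd_eq_if_blocks_agree[OF s0_arcs(2) s1_arcs(2) s0_arcs(3) s1_arcs(3)] blocks0 blocks1
    by simp
qed

lemma out_nbhd_eq_if_mem_block: "(u, b) \<in> E \<Longrightarrow> a \<in> block u b \<Longrightarrow> N a = N b"
  using out_nbhd_eq_if_same_cls mem_block_self by (metis block_def)

lemma out_nbhd_eq_if_common:
  assumes "(u, a) \<in> E" "b \<in> N u \<inter> N a" "b' \<in> N u \<inter> N a"
  shows "N b = N b'"
proof -
  have "b \<in> cls u (succ3 (col u a))" "b' \<in> cls u (succ3 (col u a))"
    using assms(2,3) inter_out_nbhd[OF assms(1)] by simp_all
  then show ?thesis
    by (rule out_nbhd_eq_if_same_cls)
qed

lemma out_nbhd_eq_if_closers: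
  assumes uw: "(u, w) \<in> E" and "b \<in> closers u w" "b' \<in> closers u w"
  shows "N b = N b'"
proof -
  obtain z where "(u, z) \<in> E" "(w, z) \<in> E"
    using common_out_neighbour[OF uw] by blast
  then have "closers u w = cls w (succ3 (succ3 (col w z)))"
    using out_nbhd_parts(3)[OF uw] by blast
  then have "b \<in> cls w (succ3 (succ3 (col w z)))" "b' \<in> cls w (succ3 (succ3 (col w z)))"
    using assms(2,3) by simp_all
  then show ?thesis
    by (rule out_nbhd_eq_if_same_cls)
qed

section \<open>The eight blocks around \<open>x0\<close>\<close>

definition nbhd_triangle :: "'a \<Rightarrow> 'a \<Rightarrow> 'a \<Rightarrow> bool" where
  "nbhd_triangle i k j \<longleftrightarrow> (x0, i) \<in> E \<and> (x0, k) \<in> E \<and> (x0, j) \<in> E \<and>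
     (i, k) \<in> E \<and> (k, j) \<in> E \<and> (j, i) \<in> E"

lemma nbhd_triangle_rotate: "nbhd_triangle i k j \<Longrightarrow> nbhd_triangle k j i"
  by (auto simp: nbhd_triangle_def)

lemma nbhd_triangle_exists:
  obtains i k j where "nbhd_triangle i k j"
proof -
  obtain i k j where i: "i \<in> cls x0 0" and k: "k \<in> cls x0 (succ3 0)"
    and j: "j \<in> cls x0 (succ3 (succ3 0))"
    using cls_nonempty[OF x0_in_V zero_less_numeral] cls_nonempty[OF x0_in_V succ3_less] by meson
  have "(i, k) \<in> E" "(k, j) \<in> E"
    using arc_cls_succ3 i k j by blast+
  moreover have "(j, i) \<in> E"
    using arc_cls_succ3[OF j] i by simp
  moreover have "(x0, i) \<in> E" "(x0, k) \<in> E" "(x0, j) \<in> E"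
    using i k j by (simp_all add: mem_cls)
  ultimately have "nbhd_triangle i k j"
    by (simp add: nbhd_triangle_def)
  then show ?thesis
    by (rule that)
qed

lemma nbhd_triangleD:
  assumes "nbhd_triangle i k j"
  shows "(x0, i) \<in> E" "(x0, k) \<in> E" "(x0, j) \<in> E" "(i, k) \<in> E" "(k, j) \<in> E" "(j, i) \<in> E"
  using assms by (simp_all add: nbhd_triangle_def)

lemma out_nbhd_triangle_vertex:
  assumes T: "nbhd_triangle i k j"
  shows "N i = block x0 k \<union> (N i \<inter> N k) \<union> closers x0 i"
proof -
  note arcs = nbhd_triangleD[OF T]
  have "N x0 \<inter> N i = block x0 k"
    using common_out_nbhd_block_left[OF arcs(1)] arcs(2,4) by simp
  then show ?thesis
    using out_nbhd_cls[OF arc_in_V(2)[OF arcs(1)] col_less[OF arcs(4)]] out_nbhd_parts[OF arcs(1,2,4)]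
    by simp
qed

lemma triangle_common_avoids_x0:
  assumes T: "nbhd_triangle i k j"
  shows "N i \<inter> N k \<inter> N x0 = {}" "N i \<inter> N k \<inter> in_nbhd E x0 = {}"
proof -
  note arcs = nbhd_triangleD[OF T]
  define c where "c = col i k"
  have c: "c < 3"
    using col_less[OF arcs(4)] by (simp add: c_def)
  note parts = out_nbhd_parts[OF arcs(1,2,4), folded c_def]
  have "N i \<inter> N k \<inter> N x0 \<subseteq> cls i (succ3 c) \<inter> cls i c"
    using parts by blast
  then show "N i \<inter> N k \<inter> N x0 = {}"
    using cls_disjoint[OF succ3_neq[OF c]] by blast
  have "N i \<inter> N k \<inter> in_nbhd E x0 \<subseteq> (N i \<inter> N k) \<inter> closers x0 i"
    by (auto simp: mem_closers)
  then have "N i \<inter> N k \<inter> in_nbhd E x0 \<subseteq> cls i (succ3 c) \<inter> cls i (succ3 (succ3 c))"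
    using parts by simp
  then show "N i \<inter> N k \<inter> in_nbhd E x0 = {}"
    using cls_disjoint[OF succ3_neq[OF succ3_less]] by blast
qed

lemma triangle_common_rotate:
  assumes T: "nbhd_triangle i k j"
  shows "N i \<inter> N k = N k \<inter> N j"
proof -
  note arcs = nbhd_triangleD[OF T]
  have "block x0 j \<subseteq> N x0" "closers x0 k \<subseteq> in_nbhd E x0"
    by (auto simp: block_def cls_def mem_closers)
  then have "N i \<inter> N k \<subseteq> N k \<inter> N j"
    using out_nbhd_triangle_vertex[OF nbhd_triangle_rotate[OF T]] triangle_common_avoids_x0[OF T]
    by blast
  moreover have "finite (N k \<inter> N j)"
    using finite_out_nbhd[OF arc_in_V(1)[OF arcs(5)]] by blast
  moreover have "card (N i \<inter> N k) = card (N k \<inter> N j)"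
    using card_inter_out_nbhd[OF arcs(4)] card_inter_out_nbhd[OF arcs(5)] by simp
  ultimately show ?thesis
    using card_subset_eq by blast
qed

lemma out_nbhd_triangle_closer:
  assumes T: "nbhd_triangle i k j" and jb: "jb \<in> closers x0 i"
  shows "N jb = block jb x0 \<union> block x0 k \<union> closers x0 k"
proof -
  note arcs = nbhd_triangleD[OF T]
  define c where "c = col i k"
  note parts = out_nbhd_parts[OF arcs(1,2,4), folded c_def]
  have c: "c < 3"
    using col_less[OF arcs(4)] by (simp add: c_def)
  have "k \<in> cls i (succ3 (succ3 (succ3 c)))"
    using parts(1) arcs(2,4) succ3_succ3_succ3[OF c] by auto
  then have jbk: "(jb, k) \<in> E"
    using arc_cls_succ3 jb parts(3) by blast
  have jbx0: "(jb, x0) \<in> E"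
    using jb by (simp add: mem_closers)
  have "k \<in> N jb \<inter> N x0"
    using jbk arcs(2) by simp
  then have "block jb k = block x0 k"
    using common_out_nbhd_block_left[OF jbx0] common_out_nbhd_block_right[OF jbx0 jbk arcs(2)] by simp
  then show ?thesis
    using out_nbhd_eq_via_arc[OF jbx0 jbk arcs(2)] by simp
qed

lemma block_triangle_closers:
  assumes T: "nbhd_triangle i k j" and jb: "jb \<in> closers x0 i" and ib: "ib \<in> closers x0 k"
  shows "block jb x0 = block ib x0"
proof -
  have jbib: "(jb, ib) \<in> E"
    using out_nbhd_triangle_closer[OF T jb] ib by auto
  have arcs: "(jb, x0) \<in> E" "(ib, x0) \<in> E"
    using jb ib by (simp_all add: mem_closers)
  then have "x0 \<in> N jb \<inter> N ib"
    by simp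
  then show ?thesis
    using common_out_nbhd_block_left[OF jbib] common_out_nbhd_block_right[OF jbib arcs] by simp
qed

lemma closers_triangle_disjoint:
  assumes T: "nbhd_triangle i k j"
  shows "closers x0 i \<inter> closers x0 k = {}"
  using triangle_common_avoids_x0(2)[OF T] by (auto simp: mem_closers)

lemma out_nbhd_triangle_common:
  assumes T: "nbhd_triangle i k j" and z: "z \<in> N i \<inter> N k"
  shows "N z = closers x0 i \<union> closers x0 k \<union> closers x0 j"
proof -
  have T': "nbhd_triangle k j i" "nbhd_triangle j i k"
    using nbhd_triangle_rotate T by blast+
  have common: "z \<in> N k \<inter> N j" "z \<in> N j \<inter> N i"
    using z triangle_common_rotate T T' by blast+
  have "closers x0 i \<subseteq> N z" if T: "nbhd_triangle i k j" and z: "z \<in> N i \<inter> N k" for i k j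
  proof
    fix y assume y: "y \<in> closers x0 i"
    note arcs = nbhd_triangleD[OF T]
    define c where "c = col i k"
    note parts = out_nbhd_parts[OF arcs(1,2,4), folded c_def]
    show "y \<in> N z"
      using arc_cls_succ3[of z i "succ3 c" y] z y parts by simp
  qed
  then have sub: "closers x0 i \<union> closers x0 k \<union> closers x0 j \<subseteq> N z"
    using T T' z common by blast
  have arcs: "(x0, i) \<in> E" "(x0, k) \<in> E" "(x0, j) \<in> E"
    using nbhd_triangleD[OF T] by simp_all
  have "closers x0 j \<inter> closers x0 i = {}"
    using closers_triangle_disjoint[OF T'(2)] .
  then have "card (closers x0 i \<union> closers x0 k \<union> closers x0 j) = 3 * n"
    using closers_triangle_disjoint[OF T] closers_triangle_disjoint[OF T'(1)]
      card_closers[OF arcs(1)] card_closers[OF arcs(2)] card_closers[OF arcs(3)]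
    by (intro card_Un3_disjoint) (simp_all add: Int_commute)
  moreover have zV: "z \<in> V"
    using z arc_in_V by auto
  ultimately have "card (closers x0 i \<union> closers x0 k \<union> closers x0 j) = card (N z)"
    using card_out_nbhd[OF zV] by simp
  then show ?thesis
    using card_subset_eq[OF finite_out_nbhd[OF zV] sub] by simp
qed

lemma block_disjoint_nbhds:
  assumes "(p, x) \<in> E"
  shows "block p x \<inter> (N x \<union> in_nbhd E x) = {}"
proof -
  have "N u = N x" if "u \<in> block p x" for u
    using out_nbhd_eq_if_mem_block[OF assms that] .
  then show ?thesis
    using irrefl by fastforce
qed

lemma block_disjoint_out_nbhd:
  assumes "(p, x) \<in> E" "(x, y) \<in> E"
  shows "block p x \<inter> N y = {}"
proof -
  have "(u, y) \<in> E" if "u \<in> block p x" for u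
    using out_nbhd_eq_if_mem_block[OF assms(1) that] assms(2) by (metis out_nbhd_iff)
  then show ?thesis
    using asym by auto
qed

text \<open>Block \<open>h\<close> plays the role of vertex \<open>h\<close> of \<open>H\<close>, i.e. of the quaternion
  \<open>1, -1, i, -i, j, -j, k, -k\<close> (in this order), with \<open>x0 \<mapsto> 1\<close> and the classes of
  \<open>i, k, j\<close> in \<open>N x0\<close> mapped to \<open>i, k, j\<close>.\<close>

definition H_blocks :: "'a \<Rightarrow> 'a \<Rightarrow> 'a \<Rightarrow> 'a \<Rightarrow> nat \<Rightarrow> 'a set" where
  "H_blocks i k j jb h = [block jb x0, N i \<inter> N k, block x0 i, closers x0 k,
     block x0 j, closers x0 i, block x0 k, closers x0 j] ! h"

lemma H_blocks_shape:
  assumes T: "nbhd_triangle i k j" and jb: "jb \<in> closers x0 i" and h: "h \<in> H_V"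
  shows "\<exists>p q. (p, q) \<in> E \<and> (H_blocks i k j jb h = block p q \<or>
    H_blocks i k j jb h = N p \<inter> N q \<or> H_blocks i k j jb h = closers p q)"
proof -
  have "(jb, x0) \<in> E"
    using jb by (simp add: mem_closers)
  with nbhd_triangleD[OF T] H_V_cases[OF h] show ?thesis
    by (elim disjE; simp add: H_blocks_def; blast)
qed

lemma H_blocks_card:
  assumes T: "nbhd_triangle i k j" and jb: "jb \<in> closers x0 i" and h: "h \<in> H_V"
  shows "H_blocks i k j jb h \<subseteq> V \<and> finite (H_blocks i k j jb h) \<and> card (H_blocks i k j jb h) = n"
proof -
  obtain p q where pq: "(p, q) \<in> E" and shape: "H_blocks i k j jb h = block p q \<or>
      H_blocks i k j jb h = N p \<inter> N q \<or> H_blocks i k j jb h = closers p q"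
    using H_blocks_shape[OF T jb h] by blast
  have pV: "p \<in> V"
    using arc_in_V(1)[OF pq] .
  have "block p q \<subseteq> V \<and> finite (block p q) \<and> card (block p q) = n"
    using arc_in_V finite_cls[OF pV] card_cls[OF pV col_less[OF pq]] by (auto simp: block_def cls_def)
  moreover have "N p \<inter> N q \<subseteq> V \<and> finite (N p \<inter> N q) \<and> card (N p \<inter> N q) = n"
    using card_inter_out_nbhd[OF pq] finite_out_nbhd[OF pV] arc_in_V by auto
  moreover have "closers p q \<subseteq> V \<and> finite (closers p q) \<and> card (closers p q) = n"
    using card_closers[OF pq] arc_in_V by (auto simp: mem_closers)
  ultimately show ?thesis
    using shape by auto
qed

lemma H_blocks_twins:
  assumes T: "nbhd_triangle i k j" and jb: "jb \<in> closers x0 i" and h: "h \<in> H_V"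
    and u: "u \<in> H_blocks i k j jb h" and v: "v \<in> H_blocks i k j jb h"
  shows "N u = N v"
proof -
  obtain p q where pq: "(p, q) \<in> E" and shape: "H_blocks i k j jb h = block p q \<or>
      H_blocks i k j jb h = N p \<inter> N q \<or> H_blocks i k j jb h = closers p q"
    using H_blocks_shape[OF T jb h] by blast
  from shape show ?thesis
  proof (elim disjE)
    assume "H_blocks i k j jb h = block p q"
    then show ?thesis
      using out_nbhd_eq_if_mem_block[OF pq, of u] out_nbhd_eq_if_mem_block[OF pq, of v] u v by simp
  next
    assume "H_blocks i k j jb h = N p \<inter> N q"
    then show ?thesis
      using out_nbhd_eq_if_common[OF pq, of u v] u v by simp
  next
    assume "H_blocks i k j jb h = closers p q"
    then show ?thesis
      using out_nbhd_eq_if_closers[OF pq, of u v] u v by simp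
  qed
qed

lemma H_blocks_disjoint:
  assumes T: "nbhd_triangle i k j" and jb: "jb \<in> closers x0 i"
    and h: "h \<in> H_V" and h': "h' \<in> H_V" and "h \<noteq> h'"
  shows "H_blocks i k j jb h \<inter> H_blocks i k j jb h' = {}"
proof -
  note arcs = nbhd_triangleD[OF T]
  have T': "nbhd_triangle k j i" "nbhd_triangle j i k"
    using nbhd_triangle_rotate T by blast+
  have jbx0: "(jb, x0) \<in> E"
    using jb by (simp add: mem_closers)
  have X: "block jb x0 \<inter> (N x0 \<union> in_nbhd E x0) = {}"
    using block_disjoint_nbhds[OF jbx0] .
  have Z: "(N i \<inter> N k) \<inter> (N x0 \<union> in_nbhd E x0) = {}"
    using triangle_common_avoids_x0[OF T] by blast
  have XZ: "block jb x0 \<inter> (N i \<inter> N k) = {}"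
    using block_disjoint_out_nbhd[OF jbx0 arcs(1)] by blast
  have in_x0: "closers x0 i \<subseteq> in_nbhd E x0" "closers x0 k \<subseteq> in_nbhd E x0"
    "closers x0 j \<subseteq> in_nbhd E x0"
    by (auto simp: mem_closers)
  have out_x0: "block x0 i \<subseteq> N x0" "block x0 k \<subseteq> N x0" "block x0 j \<subseteq> N x0"
    by (auto simp: block_def cls_def)
  have x0_asym: "N x0 \<inter> in_nbhd E x0 = {}"
    using asym by auto
  have "col x0 k = succ3 (col x0 i)" "col x0 j = succ3 (col x0 k)" "col x0 i = succ3 (col x0 j)"
    using arc_iff_col arcs by blast+
  then have out_disj: "block x0 i \<inter> block x0 k = {}" "block x0 k \<inter> block x0 j = {}"
    "block x0 j \<inter> block x0 i = {}"
    using cls_disjoint succ3_neq col_less[OF arcs(1)] col_less[OF arcs(2)] col_less[OF arcs(3)]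
    by (metis block_def)+
  have in_disj: "closers x0 i \<inter> closers x0 k = {}" "closers x0 k \<inter> closers x0 j = {}"
    "closers x0 j \<inter> closers x0 i = {}"
    using closers_triangle_disjoint T T' by blast+
  have X_disj: "block jb x0 \<inter> block x0 i = {}" "block jb x0 \<inter> block x0 k = {}"
    "block jb x0 \<inter> block x0 j = {}" "block jb x0 \<inter> closers x0 i = {}"
    "block jb x0 \<inter> closers x0 k = {}" "block jb x0 \<inter> closers x0 j = {}"
    using X out_x0 in_x0 by blast+
  have Z_disj: "N i \<inter> N k \<inter> block x0 i = {}" "N i \<inter> N k \<inter> block x0 k = {}"
    "N i \<inter> N k \<inter> block x0 j = {}" "N i \<inter> N k \<inter> closers x0 i = {}"
    "N i \<inter> N k \<inter> closers x0 k = {}" "N i \<inter> N k \<inter> closers x0 j = {}"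
    using Z out_x0 in_x0 by blast+
  have out_in_disj: "block x0 i \<inter> closers x0 i = {}" "block x0 i \<inter> closers x0 k = {}"
    "block x0 i \<inter> closers x0 j = {}" "block x0 k \<inter> closers x0 i = {}"
    "block x0 k \<inter> closers x0 k = {}" "block x0 k \<inter> closers x0 j = {}"
    "block x0 j \<inter> closers x0 i = {}" "block x0 j \<inter> closers x0 k = {}"
    "block x0 j \<inter> closers x0 j = {}"
    using x0_asym out_x0 in_x0 by blast+
  note disj = X_disj Z_disj XZ out_in_disj out_disj in_disj
  show ?thesis
    using H_V_cases[OF h] H_V_cases[OF h'] \<open>h \<noteq> h'\<close>
    by (elim disjE) (simp_all add: H_blocks_def disj disj[THEN Int_empty_sym])
qed

lemma out_nbhd_x0_triangle:
  assumes T: "nbhd_triangle i k j"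
  shows "N x0 = block x0 i \<union> block x0 k \<union> block x0 j"
proof -
  note arcs = nbhd_triangleD[OF T]
  have "N x0 \<inter> N i = block x0 k"
    using common_out_nbhd_block_left[OF arcs(1)] arcs(2,4) by simp
  moreover have "j \<in> N x0 \<inter> in_nbhd E i"
    using arcs(3,6) by simp
  then have "N x0 \<inter> in_nbhd E i = block x0 j"
    using inter_in_nbhd[OF arcs(1)] block_eq_cls[of j x0] by simp
  ultimately show ?thesis
    using out_nbhd_split[OF arcs(1)] by simp
qed

lemma H_blocks_representatives:
  assumes T: "nbhd_triangle i k j" and jb: "jb \<in> closers x0 i"
  shows "\<exists>r. \<forall>h\<in>H_V.
    r h \<in> H_blocks i k j jb h \<and> N (r h) = \<Union> (H_blocks i k j jb ` {h' \<in> H_V. (h, h') \<in> H_E})"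
proof -
  let ?C = "H_blocks i k j jb"
  note arcs = nbhd_triangleD[OF T]
  have T': "nbhd_triangle k j i" "nbhd_triangle j i k"
    using nbhd_triangle_rotate T by blast+
  obtain ib kb z where ib: "ib \<in> closers x0 k" and kb: "kb \<in> closers x0 j" and z: "z \<in> N i \<inter> N k"
    using card_closers[OF arcs(2)] card_closers[OF arcs(3)] card_inter_out_nbhd[OF arcs(4)] n_pos
    by (metis all_not_in_conv card.empty not_one_le_zero)
  have X: "block ib x0 = block jb x0" "block kb x0 = block jb x0"
    using block_triangle_closers[OF T jb ib] block_triangle_closers[OF T'(2) kb jb] by simp_all
  have Z: "N k \<inter> N j = N i \<inter> N k" "N j \<inter> N i = N i \<inter> N k"
    using triangle_common_rotate T T' by metis+
  have reps: "x0 \<in> ?C 0" "z \<in> ?C 1" "i \<in> ?C 2" "ib \<in> ?C 3" "j \<in> ?C 4" "jb \<in> ?C 5" "k \<in> ?C 6"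
    "kb \<in> ?C 7"
    using mem_block_self jb ib kb z arcs by (simp_all add: H_blocks_def mem_closers)
  have rep_nbhd0: "N x0 = ?C 2 \<union> ?C 4 \<union> ?C 6"
    using out_nbhd_x0_triangle[OF T] by (simp add: H_blocks_def Un_ac)
  have rep_nbhd1: "N z = ?C 3 \<union> ?C 5 \<union> ?C 7"
    using out_nbhd_triangle_common[OF T z] by (simp add: H_blocks_def Un_ac)
  have rep_nbhd2: "N i = ?C 1 \<union> ?C 5 \<union> ?C 6"
    using out_nbhd_triangle_vertex[OF T] by (simp add: H_blocks_def Un_ac)
  have rep_nbhd3: "N ib = ?C 0 \<union> ?C 4 \<union> ?C 7"
    using out_nbhd_triangle_closer[OF T'(1) ib] X(1) by (simp add: H_blocks_def Un_ac)
  have rep_nbhd4: "N j = ?C 1 \<union> ?C 2 \<union> ?C 7"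
    using out_nbhd_triangle_vertex[OF T'(2)] Z(2) by (simp add: H_blocks_def Un_ac)
  have rep_nbhd5: "N jb = ?C 0 \<union> ?C 3 \<union> ?C 6"
    using out_nbhd_triangle_closer[OF T jb] by (simp add: H_blocks_def Un_ac)
  have rep_nbhd6: "N k = ?C 1 \<union> ?C 3 \<union> ?C 4"
    using out_nbhd_triangle_vertex[OF T'(1)] Z(1) by (simp add: H_blocks_def Un_ac)
  have rep_nbhd7: "N kb = ?C 0 \<union> ?C 2 \<union> ?C 5"
    using out_nbhd_triangle_closer[OF T'(2) kb] X(2) by (simp add: H_blocks_def Un_ac)
  have out_H: "{h' \<in> H_V. (0, h') \<in> H_E} = {2, 4, 6}" "{h' \<in> H_V. (1, h') \<in> H_E} = {3, 5, 7}"
    "{h' \<in> H_V. (2, h') \<in> H_E} = {1, 5, 6}" "{h' \<in> H_V. (3, h') \<in> H_E} = {0, 4, 7}"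
    "{h' \<in> H_V. (4, h') \<in> H_E} = {1, 2, 7}" "{h' \<in> H_V. (5, h') \<in> H_E} = {0, 3, 6}"
    "{h' \<in> H_V. (6, h') \<in> H_E} = {1, 3, 4}" "{h' \<in> H_V. (7, h') \<in> H_E} = {0, 2, 5}"
    by (auto simp: H_V_def H_E_def)
  define r where "r h = [x0, z, i, ib, j, jb, k, kb] ! h" for h
  have "r h \<in> ?C h \<and> N (r h) = \<Union> (?C ` {h' \<in> H_V. (h, h') \<in> H_E})" if "h \<in> H_V" for h
    using H_V_cases[OF that] reps rep_nbhd0 rep_nbhd1 rep_nbhd2 rep_nbhd3 rep_nbhd4 rep_nbhd5
      rep_nbhd6 rep_nbhd7 out_H
    by (elim disjE) (simp_all add: r_def Un_assoc)
  then show ?thesis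
    by blast
qed

lemma H_blocks_out_nbhd:
  assumes T: "nbhd_triangle i k j" and jb: "jb \<in> closers x0 i" and h: "h \<in> H_V"
    and u: "u \<in> H_blocks i k j jb h"
  shows "N u = \<Union> (H_blocks i k j jb ` {h' \<in> H_V. (h, h') \<in> H_E})"
proof -
  obtain r where "\<forall>h\<in>H_V.
    r h \<in> H_blocks i k j jb h \<and> N (r h) = \<Union> (H_blocks i k j jb ` {h' \<in> H_V. (h, h') \<in> H_E})"
    using H_blocks_representatives[OF T jb] by blast
  then have r: "r h \<in> H_blocks i k j jb h"
    "N (r h) = \<Union> (H_blocks i k j jb ` {h' \<in> H_V. (h, h') \<in> H_E})"
    using h by simp_all
  then show ?thesis
    using H_blocks_twins[OF T jb h u r(1)] by simp
qed

lemma V_eq_H_blocks: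
  assumes conn: "dg_connected V E" and T: "nbhd_triangle i k j" and jb: "jb \<in> closers x0 i"
  shows "V = (\<Union>h\<in>H_V. H_blocks i k j jb h)"
proof -
  define W where "W = (\<Union>h\<in>H_V. H_blocks i k j jb h)"
  have closed: "v \<in> W" if "u \<in> W" "(u, v) \<in> E" for u v
    using that H_blocks_out_nbhd[OF T jb] by (fastforce simp: W_def)
  have "x0 \<in> H_blocks i k j jb 0"
    using mem_block_self jb by (simp add: H_blocks_def mem_closers)
  then have x0W: "x0 \<in> W"
    by (auto simp: W_def H_V_def)
  have reach: "E\<^sup>* `` {x0} \<subseteq> W"
  proof
    fix v assume "v \<in> E\<^sup>* `` {x0}"
    then have "(x0, v) \<in> E\<^sup>*"
      by simp
    then show "v \<in> W"
      by (induction rule: rtrancl_induct) (use x0W closed in blast)+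
  qed
  moreover have "finite W" "W \<subseteq> V"
    using H_blocks_card[OF T jb] by (auto simp: W_def H_V_def)
  moreover have "V = E\<^sup>* `` {x0}"
  proof (rule vertex_transitive_connected_eq_reach[OF arcs_subset conn _ x0_in_V])
    show "\<forall>a\<in>V. \<forall>b\<in>V. \<exists>g. dg_aut V E g \<and> g a = b"
      using vertex_transitive by blast
    show "finite (E\<^sup>* `` {x0})"
      using finite_subset[OF reach \<open>finite W\<close>] .
  qed
  ultimately show ?thesis
    unfolding W_def by blast
qed

lemma isomorphic_lex_H:
  assumes conn: "dg_connected V E"
  shows "dg_isomorphic V E (lex_V H_V (Kbar_V n)) (lex_E H_V H_E (Kbar_V n) Kbar_E)"
proof -
  obtain i k j where T: "nbhd_triangle i k j"
    using nbhd_triangle_exists by blast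
  obtain jb where jb: "jb \<in> closers x0 i"
    using closers_nonempty nbhd_triangleD(1)[OF T] by blast
  show ?thesis
  proof (rule dg_isomorphic_lex_Kbar_if_partition)
    show "V = (\<Union>h\<in>H_V. H_blocks i k j jb h)"
      using V_eq_H_blocks[OF conn T jb] .
    show "finite (H_blocks i k j jb h) \<and> card (H_blocks i k j jb h) = n" if "h \<in> H_V" for h
      using H_blocks_card[OF T jb that] by blast
  qed (use H_blocks_disjoint[OF T jb] H_blocks_out_nbhd[OF T jb] in blast)+
qed

end

lemma dg_isomorphic_lex_H_if_out_nbhd:
  assumes "is_digraph V E" "dg_connected V E" "C_homogeneous V E" "x \<in> V" "n \<ge> 1"
    and "C3_blowup E (out_nbhd E x) n"
  shows "dg_isomorphic V E (lex_V H_V (Kbar_V n)) (lex_E H_V H_E (Kbar_V n) Kbar_E)"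
proof -
  interpret C3_blowup_nbhds V E n x
    using assms by unfold_locales
  show ?thesis
    using isomorphic_lex_H[OF assms(2)] .
qed

theorem lemma3p9:
  fixes V :: "'a set" and E :: "('a \<times> 'a) set" and x :: 'a and n :: nat
  assumes "is_digraph V E"
    and "dg_connected V E"
    and "locally_finite V E"
    and "C_homogeneous V E"
    and "x \<in> V"
    and "n \<ge> 1"
    and "dg_isomorphic (out_nbhd E x) (induced E (out_nbhd E x))
           (lex_V C3_V (Kbar_V n)) (lex_E C3_V C3_E (Kbar_V n) Kbar_E)
       \<or> dg_isomorphic (in_nbhd E x) (induced E (in_nbhd E x))
           (lex_V C3_V (Kbar_V n)) (lex_E C3_V C3_E (Kbar_V n) Kbar_E)"
  shows "dg_isomorphic V E (lex_V H_V (Kbar_V n)) (lex_E H_V H_E (Kbar_V n) Kbar_E)"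
  using assms(7)
proof
  assume "dg_isomorphic (out_nbhd E x) (induced E (out_nbhd E x))
    (lex_V C3_V (Kbar_V n)) (lex_E C3_V C3_E (Kbar_V n) Kbar_E)"
  then show ?thesis
    using dg_isomorphic_lex_H_if_out_nbhd[OF assms(1,2,4,5,6)] C3_blowup_if_isomorphic by blast
next
  assume "dg_isomorphic (in_nbhd E x) (induced E (in_nbhd E x))
    (lex_V C3_V (Kbar_V n)) (lex_E C3_V C3_E (Kbar_V n) Kbar_E)"
  then have "C3_blowup (E\<inverse>) (out_nbhd (E\<inverse>) x) n"
    unfolding out_nbhd_converse by (intro C3_blowup_converse C3_blowup_if_isomorphic)
  moreover have "dg_connected V (E\<inverse>)"
    using assms(2) by (simp add: dg_connected_converse)
  ultimately obtain \<phi> where "dg_iso V (E\<inverse>) (lex_V H_V (Kbar_V n)) (lex_E H_V H_E (Kbar_V n) Kbar_E) \<phi>"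
    using dg_isomorphic_lex_H_if_out_nbhd[OF is_digraph_converse[OF assms(1)] _
        C_homogeneous_converse[OF assms(4)] assms(5,6)]
    unfolding dg_isomorphic_def by blast
  then have "dg_iso V E (lex_V H_V (Kbar_V n)) (lex_E H_V (H_E\<inverse>) (Kbar_V n) Kbar_E) \<phi>"
    by (simp add: dg_iso_converse_left lex_Kbar_converse)
  then show ?thesis
    using dg_iso_trans dg_iso_lex_Kbar[OF H_antiautomorphism] unfolding dg_isomorphic_def by blast
qed

end
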